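(* Let $q\ge2$ and $s\ge2$ an even integer, and suppose Assumptions A1, A2$(s,\mu)$, A3$(s,q)$ hold. Let $\alpha>0$ and let $\{\boldsymbol\beta_k\}$ be the SGD sequence with a deterministic initialization $\boldsymbol\beta_0$. Then for all $k\ge1$, $$\big\||\boldsymbol\beta_k-\boldsymbol\beta^*|_s\big\|_q^2\le\big(1-2\alpha\mu+7\max\{q,s\}\alpha^2L_{s,q}^2\big)\big\||\boldsymbol\beta_{k-1}-\boldsymbol\beta^*|_s\big\|_q^2+3\max\{q,s\}\alpha^2M_{s,q}^2.$$ If moreover $\alpha<\alpha_{s,q}$, the same inequality holds with $\boldsymbol\beta_k,\boldsymbol\beta_{k-1}$ replaced by the stationary iterates $\boldsymbol\beta_k^\circ,\boldsymbol\beta_{k-1}^\circ$.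
   Context: Standing setup. Let $d\ge1$. Let $\bm\xi,\bm\xi_1,\bm\xi_2,\ldots$ be i.i.d. random elements with law $\Pi$ on a measurable space, and let $g(\boldsymbol\beta,\bm\xi)$ be real valued and differentiable in $\boldsymbol\beta\in\mathbb R^d$ with gradient $\nabla g(\boldsymbol\beta,\bm\xi)$ (w.r.t. $\boldsymbol\beta$). Let $G(\boldsymbol\beta)=\mathbb E\,g(\boldsymbol\beta,\bm\xi)$, assumed differentiable with $\nabla G(\boldsymbol\beta)=\mathbb E\,\nabla g(\boldsymbol\beta,\bm\xi)$. For a constant learning rate $\alpha>0$ and initialization $\boldsymbol\beta_0$, the SGD iterates are $\boldsymbol\beta_k=\boldsymbol\beta_{k-1}-\alpha\nabla g(\boldsymbol\beta_{k-1},\bm\xi_k)$, $k\ge1$. Notation: $|\bm v|_s=(\sum_{i=1}^d|v_i|^s)^{1/s}$ for $s\ge1$, $|\bm v|_\infty=\max_i|v_i|$; for a random variable $X$, $\|X\|_q=(\mathbb E|X|^q)^{1/q}$; for a vector $\bm v$ and integer $m$, $\bm v^{\odot m}=(v_1^m,\ldots,v_d^m)^\top$. Assumption A1 (coercivity): $G(\boldsymbol\beta_n)\to\infty$ for every sequence with $|\boldsymbol\beta_n|_s\to\infty$. Assumption A2$(s,\mu)$ ($\ell^s$-strong convexity; $s\ge2$ even, $\mu>0$): $\langle(\boldsymbol\beta-\boldsymbol\beta')^{\odot(s-1)},\nabla G(\boldsymbol\beta)-\nabla G(\boldsymbol\beta')\rangle\ge\mu|\boldsymbol\beta-\boldsymbol\beta'|_s^s$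 for all $\boldsymbol\beta,\boldsymbol\beta'\in\mathbb R^d$. Under A1 and A2, $G$ has a unique global minimizer $\boldsymbol\beta^*$. Assumption A3$(s,q)$ ($q\ge2$, $s\ge2$ even): $M_{s,q}:=\big\||\nabla g(\boldsymbol\beta^*,\bm\xi)|_s\big\|_q<\infty$ and there is $L_{s,q}>0$ with $\big\||\nabla g(\boldsymbol\beta,\bm\xi)-\nabla g(\boldsymbol\beta',\bm\xi)|_s\big\|_q\le L_{s,q}|\boldsymbol\beta-\boldsymbol\beta'|_s$ for all $\boldsymbol\beta,\boldsymbol\beta'$. Constants: $\alpha_{s,q}:=\dfrac{2\mu}{\max\{q,s\}L_{s,q}^2}$ and $r_{\alpha,s,q}:=1-2\mu\alpha+\max\{q,s\}L_{s,q}^2\alpha^2$. Stationary iterates: for $0<\alpha<\alpha_{s,q}$ there is a unique invariant law $\pi_\alpha$ of the SGD Markov chain (with $\int|\bm u|_s^q\pi_\alpha(d\bm u)<\infty$). Let $\boldsymbol\beta_0^\circ\sim\pi_\alpha$ be independent of $(\bm\xi_k)_{k\ge1}$ and $\boldsymbol\beta_k^\circ=\boldsymbol\beta_{k-1}^\circ-\alpha\nabla g(\boldsymbol\beta_{k-1}^\circ,\bm\xi_k)$, $k\ge1$ (same samples $\bm\xi_k$ as the SGD sequence); then $\boldsymbol\beta_k^\circ\sim\pi_\alpha$ for all $k$. *)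

theory Defs
  imports "HOL-Probability.Probability"
begin

definition lsnorm :: "nat \<Rightarrow> real^'d \<Rightarrow> real" where
  "lsnorm s v = (\<Sum>i\<in>UNIV. \<bar>v $ i\<bar> ^ s) powr (1 / real s)"

definition odot_pow :: "real^'d \<Rightarrow> nat \<Rightarrow> real^'d" where
  "odot_pow v m = (\<chi> i. (v $ i) ^ m)"

text \<open>L^q norm of a real random variable (meaningful when |X|^q is integrable).\<close>
definition lq_norm :: "'a measure \<Rightarrow> real \<Rightarrow> ('a \<Rightarrow> real) \<Rightarrow> real" where
  "lq_norm M q X = (\<integral>\<omega>. \<bar>X \<omega>\<bar> powr q \<partial>M) powr (1 / q)"

fun sgd :: "(real^'d \<Rightarrow> 'x \<Rightarrow> real^'d) \<Rightarrow> real \<Rightarrow> (nat \<Rightarrow> 'a \<Rightarrow> 'x)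
            \<Rightarrow> ('a \<Rightarrow> real^'d) \<Rightarrow> nat \<Rightarrow> 'a \<Rightarrow> real^'d" where
  "sgd dg \<alpha> \<xi> b0 0 \<omega> = b0 \<omega>"
| "sgd dg \<alpha> \<xi> b0 (Suc k) \<omega> = sgd dg \<alpha> \<xi> b0 k \<omega> - \<alpha> *\<^sub>R dg (sgd dg \<alpha> \<xi> b0 k \<omega>) (\<xi> (Suc k) \<omega>)"

end

theory Submission
  imports Defs
begin

(* Write one step as beta_k - beta* = b + U with the drift b = beta_(k-1) - beta* - alpha grad G(beta_(k-1)),
   which is determined by the past, and the noise U = -alpha (grad g(beta_(k-1), xi_k) - grad G(beta_(k-1))),
   which is centred given the past. Integrating the convexity and the second-order bound of
   x |-> |x|_s^q along the segment t |-> b + t U yields Rio's inequality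
     || |b + U|_s ||_q^2 <= |b|_s^2 + (max(q, s) - 1) || |U|_s ||_q^2.
   The smoothness of |.|_s^2 together with A2 bounds the drift by
   (1 - 2 alpha mu + (s - 1) alpha^2 L^2) |beta_(k-1) - beta*|_s^2, and Minkowski's inequality with A3
   bounds the noise by alpha (2 L |beta_(k-1) - beta*|_s + M). Since beta_(k-1) is independent of xi_k,
   the one-step bound can be integrated over the law of beta_(k-1); Minkowski's inequality in L^(q/2)
   then turns it into the stated recursion for the L^q norms. *)

section \<open>The \<open>\<ell>\<^sup>s\<close> norm\<close>

lemma Holder_inequality_sum:
  fixes f g :: "'i \<Rightarrow> real"
  assumes I: "finite I" and p: "p > 1" and p': "p' > 1" and pq: "1/p + 1/p' = 1"
    and f: "\<And>i. i \<in> I \<Longrightarrow> f i \<ge> 0" and g: "\<And>i. i \<in> I \<Longrightarrow> g i \<ge> 0"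
  shows "(\<Sum>i\<in>I. f i * g i) \<le> (\<Sum>i\<in>I. f i powr p) powr (1/p) * (\<Sum>i\<in>I. g i powr p') powr (1/p')"
proof -
  define A where "A = (\<Sum>i\<in>I. f i powr p)"
  define B where "B = (\<Sum>i\<in>I. g i powr p')"
  have A0: "A \<ge> 0" "B \<ge> 0" unfolding A_def B_def by (auto intro: sum_nonneg)
  show ?thesis
  proof (cases "A = 0 \<or> B = 0")
    case True
    then show ?thesis
    proof
      assume "A = 0"
      then have "\<forall>i\<in>I. f i powr p = 0" unfolding A_def using I by (subst sum_nonneg_eq_0_iff[symmetric]) auto
      then have "\<forall>i\<in>I. f i = 0" by simp
      then show ?thesis using A0 by (simp add: A_def B_def)
    next
      assume "B = 0"
      then have "\<forall>i\<in>I. g i powr p' = 0" unfolding B_def using I by (subst sum_nonneg_eq_0_iff[symmetric]) auto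
      then have "\<forall>i\<in>I. g i = 0" by simp
      then show ?thesis using A0 by (simp add: A_def B_def)
    qed
  next
    case False
    then have Ap: "A > 0" "B > 0" using A0 by auto
    define a where "a = A powr (1/p)"
    define b where "b = B powr (1/p')"
    have ab: "a > 0" "b > 0" using Ap by (auto simp: a_def b_def)
    have ap: "a powr p = A" using Ap p by (simp add: a_def powr_powr)
    have bp: "b powr p' = B" using Ap p' by (simp add: b_def powr_powr)
    have "(\<Sum>i\<in>I. (f i / a) * (g i / b)) \<le> (\<Sum>i\<in>I. (f i / a) powr p / p + (g i / b) powr p' / p')"
      using f g ab by (intro sum_mono Youngs_inequality[OF p p' pq]) auto
    also have "\<dots> = (\<Sum>i\<in>I. f i powr p) / A / p + (\<Sum>i\<in>I. g i powr p') / B / p'"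
      using f g ab ap bp by (simp add: sum.distrib powr_divide sum_divide_distrib)
    also have "\<dots> = 1" using Ap pq by (simp add: A_def[symmetric] B_def[symmetric])
    finally have "(\<Sum>i\<in>I. f i * g i) / (a * b) \<le> 1"
      by (simp add: sum_divide_distrib)
    then show ?thesis using ab by (simp add: a_def[symmetric] b_def[symmetric] A_def[symmetric] B_def[symmetric] divide_le_eq)
  qed
qed

lemma abs_powr_of_nat: "n > 0 \<Longrightarrow> \<bar>x::real\<bar> powr real n = \<bar>x\<bar> ^ n"
  by (cases "x = 0") (auto simp: powr_realpow)

lemma powr_of_nat_nonneg: "n > 0 \<Longrightarrow> (x::real) \<ge> 0 \<Longrightarrow> x powr real n = x ^ n"
  by (cases "x = 0") (auto simp: powr_realpow)

lemma power_minus_mult_Suc[simp]: "0 < n \<Longrightarrow> (a::'a::monoid_mult) ^ (n - Suc 0) * a = a ^ n"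
  using power_minus_mult[of n a] by simp

lemma lsnorm_nonneg: "lsnorm s v \<ge> 0"
  by (simp add: lsnorm_def)

lemma lsnorm_power:
  assumes "s > 0"
  shows "lsnorm s v ^ s = (\<Sum>i\<in>UNIV. \<bar>v $ i\<bar> ^ s)"
proof -
  have "lsnorm s v ^ s = lsnorm s v powr real s"
    using assms by (simp add: powr_of_nat_nonneg lsnorm_nonneg)
  also have "\<dots> = (\<Sum>i\<in>UNIV. \<bar>v $ i\<bar> ^ s)"
    using assms unfolding lsnorm_def by (simp add: powr_powr sum_nonneg)
  finally show ?thesis .
qed

lemma lsnorm_power_even:
  assumes "s > 0" "even s"
  shows "lsnorm s v ^ s = (\<Sum>i\<in>UNIV. (v $ i) ^ s)"
  using lsnorm_power[OF assms(1)] assms(2) by (simp add: power_even_abs)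

lemma lsnorm_eq_iff:
  assumes "s > 0" "x \<ge> 0"
  shows "lsnorm s v = x \<longleftrightarrow> (\<Sum>i\<in>UNIV. \<bar>v $ i\<bar> ^ s) = x ^ s"
  using lsnorm_power[OF assms(1), of v] assms lsnorm_nonneg[of s v]
  by (metis power_eq_iff_eq_base)

lemma lsnorm_scale:
  assumes "s > 0"
  shows "lsnorm s (c *\<^sub>R v) = \<bar>c\<bar> * lsnorm s v"
proof -
  have "(\<Sum>i\<in>UNIV. \<bar>(c *\<^sub>R v) $ i\<bar> ^ s) = \<bar>c\<bar>^s * (\<Sum>i\<in>UNIV. \<bar>v $ i\<bar> ^ s)"
    by (simp add: abs_mult power_mult_distrib sum_distrib_left)
  also have "\<dots> = (\<bar>c\<bar> * lsnorm s v) ^ s"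
    by (simp only: power_mult_distrib lsnorm_power[OF assms])
  finally have e: "lsnorm s (c *\<^sub>R v) ^ s = (\<bar>c\<bar> * lsnorm s v) ^ s"
    using lsnorm_power[OF assms, of "c *\<^sub>R v"] by simp
  show ?thesis by (rule power_eq_imp_eq_base[OF e]) (use assms in \<open>auto simp: lsnorm_nonneg\<close>)
qed

lemma lsnorm_zero[simp]: "s > 0 \<Longrightarrow> lsnorm s 0 = 0"
  by (simp add: lsnorm_def)

lemma lsnorm_eq_0_iff:
  assumes "s > 0"
  shows "lsnorm s v = 0 \<longleftrightarrow> v = 0"
proof
  assume "lsnorm s v = 0"
  then have "(\<Sum>i\<in>UNIV. \<bar>v $ i\<bar> ^ s) = 0" using lsnorm_eq_iff[OF assms, of 0 v] assms by (simp add: zero_power)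
  then have "\<forall>i. \<bar>v $ i\<bar> ^ s = 0" by (subst (asm) sum_nonneg_eq_0_iff) auto
  then show "v = 0" using assms by (auto simp: vec_eq_iff)
qed (use assms in simp)

lemma lsnorm_minus: "s > 0 \<Longrightarrow> lsnorm s (- v) = lsnorm s v"
  by (simp add: lsnorm_def)

lemma abs_vec_nth_le_lsnorm:
  assumes "s > 0"
  shows "\<bar>v $ i\<bar> \<le> lsnorm s v"
proof -
  have "\<bar>v $ i\<bar> ^ s \<le> (\<Sum>j\<in>UNIV. \<bar>v $ j\<bar> ^ s)"
    by (rule member_le_sum) auto
  then show ?thesis using lsnorm_power[OF assms, of v]
    by (metis abs_ge_zero assms lsnorm_nonneg power_le_imp_le_base gr0_implies_Suc)
qed

lemma sum_abs_power_pred_le_lsnorm: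
  assumes s: "s \<ge> 2"
  shows "(\<Sum>i\<in>UNIV. \<bar>x $ i\<bar> ^ (s - 1) * \<bar>u $ i\<bar>) \<le> lsnorm s x ^ (s - 1) * lsnorm s u"
proof -
  have s0: "s > 0" "s > 1" using s by auto
  have p: "real s / real (s - 1) > 1" "real s > 1" using s by (auto simp: of_nat_diff)
  have pq: "1 / (real s / real (s - 1)) + 1 / real s = 1" using s by (simp add: of_nat_diff field_simps)
  have "(\<Sum>i\<in>UNIV. \<bar>x $ i\<bar> ^ (s - 1) * \<bar>u $ i\<bar>) \<le>
      (\<Sum>i\<in>UNIV. (\<bar>x $ i\<bar> ^ (s - 1)) powr (real s / real (s - 1))) powr (1 / (real s / real (s - 1)))
      * (\<Sum>i\<in>UNIV. \<bar>u $ i\<bar> powr real s) powr (1 / real s)"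
    by (rule Holder_inequality_sum[OF _ p pq]) auto
  also have "(\<Sum>i\<in>UNIV. (\<bar>x $ i\<bar> ^ (s - 1)) powr (real s / real (s - 1))) = (\<Sum>i\<in>UNIV. \<bar>x $ i\<bar> ^ s)"
  proof (rule sum.cong)
    fix i :: 'a
    have "(\<bar>x $ i\<bar> ^ (s - 1)) powr (real s / real (s - 1)) = (\<bar>x $ i\<bar> powr real (s - 1)) powr (real s / real (s - 1))"
      using s0 abs_powr_of_nat[of "s - 1" "x $ i"] abs_powr_of_nat[of "s - 2" "x $ i"] by simp
    also have "\<dots> = \<bar>x $ i\<bar> powr real s" using s0 by (simp add: powr_powr)
    also have "\<dots> = \<bar>x $ i\<bar> ^ s" using s0 by (simp add: abs_powr_of_nat)
    finally show "(\<bar>x $ i\<bar> ^ (s - 1)) powr (real s / real (s - 1)) = \<bar>x $ i\<bar> ^ s" .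
  qed simp
  also have "(\<Sum>i\<in>UNIV. \<bar>x $ i\<bar> ^ s) powr (1 / (real s / real (s - 1))) = lsnorm s x ^ (s - 1)"
  proof -
    have "lsnorm s x ^ (s - 1) = lsnorm s x powr real (s - 1)"
      using s0 powr_of_nat_nonneg[of "s - 1" "lsnorm s x"] lsnorm_nonneg[of s x] by simp
    also have "\<dots> = (\<Sum>i\<in>UNIV. \<bar>x $ i\<bar> ^ s) powr (1 / (real s / real (s - 1)))"
      unfolding lsnorm_def by (simp add: powr_powr)
    finally show ?thesis by simp
  qed
  also have "(\<Sum>i\<in>UNIV. \<bar>u $ i\<bar> powr real s) powr (1 / real s) = lsnorm s u"
    using s0 by (simp add: lsnorm_def abs_powr_of_nat)
  finally show ?thesis .
qed

lemma abs_sum_power_pred_le_lsnorm: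
  assumes s: "s \<ge> 2" "even s"
  shows "\<bar>\<Sum>i\<in>UNIV. (x $ i) ^ (s - 1) * u $ i\<bar> \<le> lsnorm s x ^ (s - 1) * lsnorm s u"
proof -
  have "\<bar>\<Sum>i\<in>UNIV. (x $ i) ^ (s - 1) * u $ i\<bar> \<le> (\<Sum>i\<in>UNIV. \<bar>(x $ i) ^ (s - 1) * u $ i\<bar>)"
    by (rule sum_abs)
  also have "\<dots> = (\<Sum>i\<in>UNIV. \<bar>x $ i\<bar> ^ (s - 1) * \<bar>u $ i\<bar>)"
    by (simp add: abs_mult power_abs)
  finally show ?thesis using sum_abs_power_pred_le_lsnorm[OF s(1), of x u] by linarith
qed

lemma sum_power_minus2_le_lsnorm:
  assumes s: "s \<ge> 2" "even s"
  shows "(\<Sum>i\<in>UNIV. (x $ i) ^ (s - 2) * (u $ i)^2) \<le> lsnorm s x ^ (s - 2) * lsnorm s u ^ 2"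
proof (cases "s = 2")
  case True
  then show ?thesis using lsnorm_power_even[of 2 u] by simp
next
  case False
  then have s4: "s \<ge> 4" using s by presburger
  have s0: "s > 0" "s > 2" using s4 by auto
  have p: "real s / real (s - 2) > 1" "real s / 2 > 1" using s4 by (auto simp: of_nat_diff)
  have pq: "1 / (real s / real (s - 2)) + 1 / (real s / 2) = 1" using s4 by (simp add: of_nat_diff field_simps)
  have "(\<Sum>i\<in>UNIV. (x $ i) ^ (s - 2) * (u $ i)^2) = (\<Sum>i\<in>UNIV. \<bar>x $ i\<bar> ^ (s - 2) * \<bar>u $ i\<bar>^2)"
    using s by (intro sum.cong) (auto simp: power_even_abs)
  also have "\<dots> \<le>
      (\<Sum>i\<in>UNIV. (\<bar>x $ i\<bar> ^ (s - 2)) powr (real s / real (s - 2))) powr (1 / (real s / real (s - 2)))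
      * (\<Sum>i\<in>UNIV. (\<bar>u $ i\<bar>^2) powr (real s / 2)) powr (1 / (real s / 2))"
    by (rule Holder_inequality_sum[OF _ p pq]) auto
  also have "(\<Sum>i\<in>UNIV. (\<bar>x $ i\<bar> ^ (s - 2)) powr (real s / real (s - 2))) = (\<Sum>i\<in>UNIV. \<bar>x $ i\<bar> ^ s)"
  proof (rule sum.cong)
    fix i :: 'a
    have "(\<bar>x $ i\<bar> ^ (s - 2)) powr (real s / real (s - 2)) = (\<bar>x $ i\<bar> powr real (s - 2)) powr (real s / real (s - 2))"
      using s0 abs_powr_of_nat[of "s - 1" "x $ i"] abs_powr_of_nat[of "s - 2" "x $ i"] by simp
    also have "\<dots> = \<bar>x $ i\<bar> powr real s" using s0 by (simp add: powr_powr)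
    also have "\<dots> = \<bar>x $ i\<bar> ^ s" using s0 by (simp add: abs_powr_of_nat)
    finally show "(\<bar>x $ i\<bar> ^ (s - 2)) powr (real s / real (s - 2)) = \<bar>x $ i\<bar> ^ s" .
  qed simp
  also have "(\<Sum>i\<in>UNIV. (\<bar>u $ i\<bar>^2) powr (real s / 2)) = (\<Sum>i\<in>UNIV. \<bar>u $ i\<bar> ^ s)"
  proof (rule sum.cong)
    fix i :: 'a
    have "(\<bar>u $ i\<bar>^2) powr (real s / 2) = (\<bar>u $ i\<bar> powr 2) powr (real s / 2)"
      using abs_powr_of_nat[of 2 "u $ i"] by (simp only: of_nat_numeral)
    also have "\<dots> = \<bar>u $ i\<bar> powr real s" by (subst powr_powr) simp
    also have "\<dots> = \<bar>u $ i\<bar> ^ s" using s0 by (simp add: abs_powr_of_nat)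
    finally show "(\<bar>u $ i\<bar>^2) powr (real s / 2) = \<bar>u $ i\<bar> ^ s" .
  qed simp
  also have "(\<Sum>i\<in>UNIV. \<bar>x $ i\<bar> ^ s) powr (1 / (real s / real (s - 2))) = lsnorm s x ^ (s - 2)"
  proof -
    have "lsnorm s x ^ (s - 2) = lsnorm s x powr real (s - 2)"
      using s0 powr_of_nat_nonneg[of "s - 2" "lsnorm s x"] lsnorm_nonneg[of s x] by simp
    also have "\<dots> = (\<Sum>i\<in>UNIV. \<bar>x $ i\<bar> ^ s) powr (1 / (real s / real (s - 2)))"
      unfolding lsnorm_def by (simp add: powr_powr)
    finally show ?thesis by simp
  qed
  also have "(\<Sum>i\<in>UNIV. \<bar>u $ i\<bar> ^ s) powr (1 / (real s / 2)) = lsnorm s u ^ 2"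
  proof -
    have "lsnorm s u ^ 2 = lsnorm s u powr 2"
      by (simp add: powr_of_nat_nonneg lsnorm_nonneg)
    also have "\<dots> = (\<Sum>i\<in>UNIV. \<bar>u $ i\<bar> ^ s) powr (1 / (real s / 2))"
      unfolding lsnorm_def by (simp add: powr_powr)
    finally show ?thesis by simp
  qed
  finally show ?thesis .
qed

lemma lsnorm_triangle:
  assumes s: "s \<ge> 2"
  shows "lsnorm s (u + v) \<le> lsnorm s u + lsnorm s v"
proof -
  have s0: "s > 0" using s by auto
  let ?w = "u + v"
  have "lsnorm s ?w ^ s = (\<Sum>i\<in>UNIV. \<bar>?w $ i\<bar> ^ s)" by (rule lsnorm_power[OF s0])
  also have "\<dots> = (\<Sum>i\<in>UNIV. \<bar>?w $ i\<bar> ^ (s - 1) * \<bar>?w $ i\<bar>)"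
    using s0 by (intro sum.cong refl) (metis power_minus_mult)
  also have "\<dots> \<le> (\<Sum>i\<in>UNIV. \<bar>?w $ i\<bar> ^ (s - 1) * \<bar>u $ i\<bar>) + (\<Sum>i\<in>UNIV. \<bar>?w $ i\<bar> ^ (s - 1) * \<bar>v $ i\<bar>)"
    by (simp add: sum.distrib[symmetric] distrib_left[symmetric] mult_left_mono abs_triangle_ineq sum_mono)
  also have "\<dots> \<le> lsnorm s ?w ^ (s - 1) * lsnorm s u + lsnorm s ?w ^ (s - 1) * lsnorm s v"
    by (intro add_mono sum_abs_power_pred_le_lsnorm s)
  moreover have "lsnorm s ?w ^ (s - 1) * lsnorm s ?w = lsnorm s ?w ^ s" using s0 by (rule power_minus_mult)
  ultimately have *: "lsnorm s ?w ^ (s - 1) * lsnorm s ?w \<le> lsnorm s ?w ^ (s - 1) * (lsnorm s u + lsnorm s v)"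
    by (simp add: distrib_left)
  show ?thesis
  proof (cases "lsnorm s ?w = 0")
    case True then show ?thesis by (simp add: lsnorm_nonneg add_nonneg_nonneg)
  next
    case False
    then have "lsnorm s ?w ^ (s - 1) > 0" using lsnorm_nonneg[of s ?w] by simp
    then show ?thesis using * by simp
  qed
qed

section \<open>The derivative of \<open>|x|\<^sub>s\<^sup>q\<close>\<close>

text \<open>At \<open>x = 0\<close> the junk value of
  \<open>0 powr (q - s)\<close> is harmless because the inner product vanishes.\<close>
definition lsnorm_powr_deriv :: "nat \<Rightarrow> real \<Rightarrow> real^'d \<Rightarrow> real^'d \<Rightarrow> real" where
  "lsnorm_powr_deriv s q x u = q * lsnorm s x powr (q - real s) * (odot_pow x (s - 1) \<bullet> u)"

lemma lsnorm_powr_deriv_scale: "lsnorm_powr_deriv s q x (c *\<^sub>R u) = c * lsnorm_powr_deriv s q x u"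
  by (simp add: lsnorm_powr_deriv_def)

lemma inner_odot_pow: "odot_pow x m \<bullet> u = (\<Sum>i\<in>UNIV. (x $ i) ^ m * u $ i)"
  by (simp add: odot_pow_def inner_vec_def)

lemma inner_odot_pow_self:
  assumes "s > 0" "even s"
  shows "odot_pow x (s - 1) \<bullet> x = lsnorm s x ^ s"
  using assms by (simp add: inner_odot_pow lsnorm_power_even power_minus_mult)

lemma abs_inner_odot_pow_le:
  assumes "s \<ge> 2" "even s"
  shows "\<bar>odot_pow x (s - 1) \<bullet> u\<bar> \<le> lsnorm s x ^ (s - 1) * lsnorm s u"
  using abs_sum_power_pred_le_lsnorm[OF assms] by (simp add: inner_odot_pow)

lemma inner_odot_pow_le:
  assumes "s \<ge> 2" "even s"
  shows "odot_pow x (s - 1) \<bullet> u \<le> lsnorm s x ^ (s - 1) * lsnorm s u"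
  using abs_inner_odot_pow_le[OF assms, of x u] by linarith

lemma powr_mult_power:
  assumes "X > 0" "n > 0"
  shows "X powr a * X ^ n = X powr (a + real n)"
  using assms by (simp add: powr_add powr_realpow)

lemma lsnorm_powr_deriv_bound:
  assumes s: "s \<ge> 2" "even s"
  shows "\<bar>lsnorm_powr_deriv s q x u\<bar> \<le> \<bar>q\<bar> * lsnorm s x powr (q - 1) * lsnorm s u"
proof (cases "x = 0")
  case True then show ?thesis using s by (simp add: lsnorm_powr_deriv_def)
next
  case False
  then have X: "lsnorm s x > 0" using lsnorm_eq_0_iff[of s x] lsnorm_nonneg[of s x] s by auto
  have "\<bar>lsnorm_powr_deriv s q x u\<bar> = \<bar>q\<bar> * lsnorm s x powr (q - real s) * \<bar>odot_pow x (s - 1) \<bullet> u\<bar>"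
    by (simp add: lsnorm_powr_deriv_def abs_mult)
  also have "\<dots> \<le> \<bar>q\<bar> * lsnorm s x powr (q - real s) * (lsnorm s x ^ (s - 1) * lsnorm s u)"
    by (intro mult_left_mono abs_inner_odot_pow_le s) auto
  also have "\<dots> = \<bar>q\<bar> * (lsnorm s x powr (q - real s) * lsnorm s x ^ (s - 1)) * lsnorm s u"
    by simp
  also have "lsnorm s x powr (q - real s) * lsnorm s x ^ (s - 1) = lsnorm s x powr (q - 1)"
    using powr_mult_power[OF X, of "s - 1" "q - real s"] s by (simp add: of_nat_diff)
  finally show ?thesis .
qed

lemma lsnorm_powr_convex_ineq:
  assumes s: "s \<ge> 2" "even s" and q: "q \<ge> 1"
  shows "lsnorm s x powr q + lsnorm_powr_deriv s q x (y - x) \<le> lsnorm s y powr q"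
proof (cases "x = 0")
  case True then show ?thesis using s by (simp add: lsnorm_powr_deriv_def)
next
  case False
  define X where "X = lsnorm s x"
  define Y where "Y = lsnorm s y"
  have X: "X > 0" using False lsnorm_eq_0_iff[of s x] lsnorm_nonneg[of s x] s by (auto simp: X_def)
  have Y: "Y \<ge> 0" by (simp add: Y_def lsnorm_nonneg)
  have s0: "s > 0" using s by auto
  have "lsnorm_powr_deriv s q x (y - x) = q * X powr (q - real s) * (odot_pow x (s - 1) \<bullet> y) - q * X powr (q - real s) * X ^ s"
    using inner_odot_pow_self[OF s0 s(2), of x] by (simp add: lsnorm_powr_deriv_def inner_diff_right X_def algebra_simps)
  also have "\<dots> \<le> q * X powr (q - real s) * (X ^ (s - 1) * Y) - q * X powr (q - real s) * X ^ s"
  proof -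
    have "odot_pow x (s - 1) \<bullet> y \<le> X ^ (s - 1) * Y" unfolding X_def Y_def by (rule inner_odot_pow_le[OF s])
    then show ?thesis using q X by (intro diff_right_mono mult_left_mono) auto
  qed
  also have "\<dots> = q * (X powr (q - real s) * X ^ (s - 1)) * Y - q * (X powr (q - real s) * X ^ s)"
    by (simp add: algebra_simps)
  also have "X powr (q - real s) * X ^ (s - 1) = X powr (q - 1)"
    using powr_mult_power[OF X, of "s - 1" "q - real s"] s by (simp add: of_nat_diff)
  also have "X powr (q - real s) * X ^ s = X powr q"
    using powr_mult_power[OF X, of "s" "q - real s"] s by simp
  finally have *: "lsnorm_powr_deriv s q x (y - x) \<le> q * X powr (q - 1) * Y - q * X powr q" .
  have "q * (X powr (q - 1) * Y) \<le> (q - 1) * X powr q + Y powr q"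
  proof (cases "q = 1")
    case True then show ?thesis using X by simp
  next
    case False
    then have q1: "q > 1" using q by simp
    have p: "q / (q - 1) > 1" using q1 by simp
    have pq: "1 / (q / (q - 1)) + 1 / q = 1" using q1 by (simp add: field_simps)
    have "X powr (q - 1) * Y \<le> (X powr (q - 1)) powr (q / (q - 1)) / (q / (q - 1)) + Y powr q / q"
      by (rule Youngs_inequality[OF p q1 pq]) (use Y in auto)
    also have "(X powr (q - 1)) powr (q / (q - 1)) = X powr q"
      using q1 by (simp add: powr_powr)
    finally have "X powr (q - 1) * Y \<le> X powr q * (q - 1) / q + Y powr q / q" by simp
    then have "q * (X powr (q - 1) * Y) \<le> q * (X powr q * (q - 1) / q + Y powr q / q)"
      using q1 by (intro mult_left_mono) auto
    moreover have "q * (X powr q * (q - 1) / q + Y powr q / q) = (q - 1) * X powr q + Y powr q"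
      using q1 by (simp add: field_simps)
    ultimately show ?thesis by linarith
  qed
  then show ?thesis using * by (simp add: X_def Y_def algebra_simps)
qed

lemma powr_succ_le:
  fixes a W r :: real
  assumes "0 \<le> a" "a \<le> W" "r \<ge> 0"
  shows "a powr (r + 1) \<le> a * W powr r"
proof (cases "a = 0")
  case True then show ?thesis using assms by (simp add: zero_le_mult_iff)
next
  case False
  then have "a > 0" using assms by simp
  then have "a powr (r + 1) = a * a powr r" by (simp add: powr_add)
  also have "\<dots> \<le> a * W powr r" using assms \<open>a > 0\<close> by (intro mult_left_mono powr_mono2) auto
  finally show ?thesis .
qed

lemma lsnorm_line_le:
  assumes s: "s \<ge> 2" and "\<tau> \<le> t'"
  shows "lsnorm s (b + \<tau> *\<^sub>R u) \<le> lsnorm s (b + t' *\<^sub>R u) + (t' - \<tau>) * lsnorm s u"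
proof -
  have "b + \<tau> *\<^sub>R u = (b + t' *\<^sub>R u) + (-(t' - \<tau>)) *\<^sub>R u" by (simp add: algebra_simps)
  then have "lsnorm s (b + \<tau> *\<^sub>R u) \<le> lsnorm s (b + t' *\<^sub>R u) + lsnorm s ((-(t' - \<tau>)) *\<^sub>R u)"
    using lsnorm_triangle[OF s] by metis
  also have "lsnorm s ((-(t' - \<tau>)) *\<^sub>R u) = (t' - \<tau>) * lsnorm s u"
    using s assms by (subst lsnorm_scale) auto
  finally show ?thesis .
qed

lemma lsnorm_powr_deriv_line_increment_le_through_zero:
  assumes s: "s \<ge> 2" "even s" and q: "q \<ge> 2" and tt: "t \<le> \<tau>0" "\<tau>0 \<le> t'"
    and z: "b + \<tau>0 *\<^sub>R u = 0"
  shows "lsnorm_powr_deriv s q (b + t' *\<^sub>R u) u - lsnorm_powr_deriv s q (b + t *\<^sub>R u) u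
    \<le> q * (max q (real s) - 1) * (t' - t) * lsnorm s u ^ 2 * (lsnorm s (b + t' *\<^sub>R u) + (t' - t) * lsnorm s u) powr (q - 2)"
proof -
  have s0: "s > 0" using s by auto
  have bb: "b = - \<tau>0 *\<^sub>R u" using z by (simp add: eq_neg_iff_add_eq_0 add.commute)
  have xt: "b + \<tau> *\<^sub>R u = (\<tau> - \<tau>0) *\<^sub>R u" for \<tau> by (simp add: bb algebra_simps)
  define U where "U = lsnorm s u"
  have U: "U \<ge> 0" by (simp add: U_def lsnorm_nonneg)
  define A1 where "A1 = (t' - \<tau>0) * U"
  define A2 where "A2 = (\<tau>0 - t) * U"
  define W where "W = (t' - t) * U"
  define B where "B = lsnorm s (b + t' *\<^sub>R u) + (t' - t) * lsnorm s u"
  have A: "A1 \<ge> 0" "A2 \<ge> 0" "A1 \<le> W" "A2 \<le> W" "A1 + A2 = W"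
    using tt U by (auto simp: A1_def A2_def W_def algebra_simps intro: mult_left_mono)
  have WB: "W \<le> B" using U by (simp add: W_def B_def lsnorm_nonneg U_def)
  have n1: "lsnorm s (b + t' *\<^sub>R u) = A1" using tt s0 by (simp add: xt lsnorm_scale A1_def U_def)
  have n2: "lsnorm s (b + t *\<^sub>R u) = A2" using tt s0 by (simp add: xt lsnorm_scale A2_def U_def)
  have "lsnorm_powr_deriv s q (b + t' *\<^sub>R u) u - lsnorm_powr_deriv s q (b + t *\<^sub>R u) u
      \<le> \<bar>lsnorm_powr_deriv s q (b + t' *\<^sub>R u) u\<bar> + \<bar>lsnorm_powr_deriv s q (b + t *\<^sub>R u) u\<bar>" by linarith
  also have "\<dots> \<le> q * A1 powr (q - 1) * U + q * A2 powr (q - 1) * U"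
    using lsnorm_powr_deriv_bound[OF s, of q "b + t' *\<^sub>R u" u] lsnorm_powr_deriv_bound[OF s, of q "b + t *\<^sub>R u" u] q
    by (simp add: n1 n2 U_def)
  also have "\<dots> = q * U * (A1 powr ((q - 2) + 1) + A2 powr ((q - 2) + 1))" by (simp add: algebra_simps)
  also have "\<dots> \<le> q * U * (A1 * W powr (q - 2) + A2 * W powr (q - 2))"
    using A q U by (intro mult_left_mono add_mono powr_succ_le) auto
  also have "\<dots> = q * U * (A1 + A2) * W powr (q - 2)" by (simp add: algebra_simps)
  also have "\<dots> = q * U * W * W powr (q - 2)" using A(5) by (simp only:)
  also have "\<dots> \<le> q * U * W * B powr (q - 2)"
    using A q U WB by (intro mult_left_mono powr_mono2) auto
  also have "\<dots> = q * (t' - t) * U ^ 2 * B powr (q - 2)" by (simp add: W_def power2_eq_square)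
  also have "\<dots> \<le> q * (max q (real s) - 1) * (t' - t) * U ^ 2 * B powr (q - 2)"
  proof -
    have h1: "0 \<le> (t' - t) * U ^ 2 * B powr (q - 2)" using tt by auto
    have h2: "q \<le> q * (max q (real s) - 1)" using q by (simp add: max_def)
    from mult_right_mono[OF h2 h1] show ?thesis by (simp only: mult.assoc)
  qed
  finally show ?thesis by (simp add: U_def B_def)
qed

lemma lsnorm_powr_second_deriv_le:
  fixes X U Q R q :: real
  assumes s: "s \<ge> 2" and q: "q \<ge> 2" and X: "X > 0" and U: "U \<ge> 0"
    and Q: "\<bar>Q\<bar> \<le> X ^ (s - 1) * U" and R: "R \<le> X ^ (s - 2) * U ^ 2"
  shows "q * ((q - real s) * X powr (q - 2 * real s) * Q ^ 2 + (real s - 1) * X powr (q - real s) * R)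
     \<le> q * (max q (real s) - 1) * X powr (q - 2) * U ^ 2"
proof -
  have e1: "X powr (q - 2 * real s) * (X ^ (s - 1) * U) ^ 2 = X powr (q - 2) * U ^ 2"
  proof -
    have "(X ^ (s - 1) * U) ^ 2 = X ^ (2 * (s - 1)) * U ^ 2" by (simp add: power_mult_distrib power_mult[symmetric] mult.commute)
    moreover have "X powr (q - 2 * real s) * X ^ (2 * (s - 1)) = X powr (q - 2)"
      using powr_mult_power[OF X, of "2 * (s - 1)" "q - 2 * real s"] s by (simp add: of_nat_diff)
    ultimately show ?thesis by (simp add: mult.assoc[symmetric])
  qed
  have e2: "X powr (q - real s) * (X ^ (s - 2) * U ^ 2) = X powr (q - 2) * U ^ 2"
  proof (cases "s = 2")
    case True then show ?thesis by simp
  next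
    case False
    then have "X powr (q - real s) * X ^ (s - 2) = X powr (q - 2)"
      using powr_mult_power[OF X, of "s - 2" "q - real s"] s by (simp add: of_nat_diff)
    then show ?thesis by (simp add: mult.assoc[symmetric])
  qed
  have Q2: "Q ^ 2 \<le> (X ^ (s - 1) * U) ^ 2"
    using Q by (metis abs_ge_zero power2_abs power_mono)
  have t2: "(real s - 1) * X powr (q - real s) * R \<le> (real s - 1) * X powr (q - 2) * U ^ 2"
  proof -
    have "(real s - 1) * X powr (q - real s) * R \<le> (real s - 1) * X powr (q - real s) * (X ^ (s - 2) * U ^ 2)"
      using s R by (intro mult_left_mono) auto
    also have "\<dots> = (real s - 1) * X powr (q - 2) * U ^ 2" using e2 by (simp add: mult.assoc)
    finally show ?thesis .
  qed
  have t1: "(q - real s) * X powr (q - 2 * real s) * Q ^ 2 \<le> (max q (real s) - real s) * X powr (q - 2) * U ^ 2"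
  proof (cases "q \<ge> real s")
    case True
    have "(q - real s) * X powr (q - 2 * real s) * Q ^ 2 \<le> (q - real s) * X powr (q - 2 * real s) * (X ^ (s - 1) * U) ^ 2"
      using True Q2 by (intro mult_left_mono) auto
    also have "\<dots> = (q - real s) * X powr (q - 2) * U ^ 2" using e1 by (simp add: mult.assoc)
    finally show ?thesis using True by (simp add: max_def)
  next
    case False
    then have "(q - real s) * X powr (q - 2 * real s) * Q ^ 2 \<le> 0"
      by (intro mult_nonpos_nonneg) (auto intro: mult_nonpos_nonneg)
    moreover have "0 \<le> (max q (real s) - real s) * X powr (q - 2) * U ^ 2" by auto
    ultimately show ?thesis by linarith
  qed
  have "(q - real s) * X powr (q - 2 * real s) * Q ^ 2 + (real s - 1) * X powr (q - real s) * R
      \<le> (max q (real s) - real s) * X powr (q - 2) * U ^ 2 + (real s - 1) * X powr (q - 2) * U ^ 2"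
    using t1 t2 by linarith
  also have "\<dots> = (max q (real s) - 1) * X powr (q - 2) * U ^ 2" by (simp add: algebra_simps)
  finally show ?thesis using q by (simp add: mult.assoc mult_left_mono)
qed

lemma has_real_derivative_lsnorm_powr_deriv_line:
  assumes s: "s \<ge> 2" "even s" and nz: "b + \<tau> *\<^sub>R u \<noteq> 0"
  shows "((\<lambda>\<tau>. lsnorm_powr_deriv s q (b + \<tau> *\<^sub>R u) u) has_real_derivative
     q * ((q - real s) * lsnorm s (b + \<tau> *\<^sub>R u) powr (q - 2 * real s) * (odot_pow (b + \<tau> *\<^sub>R u) (s - 1) \<bullet> u)\<^sup>2
       + (real s - 1) * lsnorm s (b + \<tau> *\<^sub>R u) powr (q - real s)
         * (\<Sum>i\<in>UNIV. (b $ i + \<tau> * u $ i) ^ (s - 2) * (u $ i)\<^sup>2))) (at \<tau>)"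
proof -
  have s0: "s > 0" using s by auto
  define P where "P = (\<lambda>\<tau>. \<Sum>i\<in>UNIV. (b $ i + \<tau> * u $ i) ^ s)"
  define Q where "Q = (\<lambda>\<tau>. \<Sum>i\<in>UNIV. (b $ i + \<tau> * u $ i) ^ (s - 1) * u $ i)"
  define R where "R = (\<lambda>\<tau>. \<Sum>i\<in>UNIV. (b $ i + \<tau> * u $ i) ^ (s - 2) * (u $ i) ^ 2)"
  define X where "X = lsnorm s (b + \<tau> *\<^sub>R u)"
  have Pn: "P \<tau> = lsnorm s (b + \<tau> *\<^sub>R u) ^ s" for \<tau>
    using lsnorm_power_even[OF s0 s(2), of "b + \<tau> *\<^sub>R u"] by (simp add: P_def)
  have line: "(\<lambda>\<tau>. lsnorm_powr_deriv s q (b + \<tau> *\<^sub>R u) u) = (\<lambda>\<tau>. q * (P \<tau> powr ((q - real s) / real s) * Q \<tau>))"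
  proof
    fix \<tau>
    have "lsnorm s (b + \<tau> *\<^sub>R u) = P \<tau> powr (1 / real s)"
      using s0 s(2) by (simp add: lsnorm_def P_def power_even_abs)
    then show "lsnorm_powr_deriv s q (b + \<tau> *\<^sub>R u) u = q * (P \<tau> powr ((q - real s) / real s) * Q \<tau>)"
      by (simp add: lsnorm_powr_deriv_def inner_odot_pow Q_def powr_powr)
  qed
  have dP: "DERIV P \<tau> :> real s * Q \<tau>"
  proof -
    have "DERIV P \<tau> :> (\<Sum>i\<in>UNIV. real s * (b $ i + \<tau> * u $ i) ^ (s - 1) * u $ i)"
      unfolding P_def by (intro DERIV_sum) (auto intro!: derivative_eq_intros)
    then show ?thesis by (simp add: Q_def sum_distrib_left mult.assoc)
  qed
  have dQ: "DERIV Q \<tau> :> (real s - 1) * R \<tau>"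
  proof -
    have "DERIV (\<lambda>x. (b $ i + x * u $ i) ^ (s - 1) * u $ i) \<tau> :> (real s - 1) * ((b $ i + \<tau> * u $ i) ^ (s - 2) * (u $ i) ^ 2)"
      for i
    proof -
      have "DERIV (\<lambda>x. (b $ i + x * u $ i) ^ (s - 1) * u $ i) \<tau> :> real (s - 1) * (b $ i + \<tau> * u $ i) ^ (s - 1 - 1) * u $ i * u $ i"
        by (auto intro!: derivative_eq_intros)
      moreover have "real (s - 1) * (b $ i + \<tau> * u $ i) ^ (s - 1 - 1) * u $ i * u $ i = (real s - 1) * ((b $ i + \<tau> * u $ i) ^ (s - 2) * (u $ i) ^ 2)"
        using s by (simp add: of_nat_diff power2_eq_square numeral_2_eq_2)
      ultimately show ?thesis by simp
    qed
    then have "DERIV Q \<tau> :> (\<Sum>i\<in>UNIV. (real s - 1) * ((b $ i + \<tau> * u $ i) ^ (s - 2) * (u $ i) ^ 2))"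
      unfolding Q_def by (rule DERIV_sum)
    then show ?thesis by (simp add: R_def sum_distrib_left)
  qed
  have X: "X > 0"
    using nz lsnorm_eq_0_iff[OF s0, of "b + \<tau> *\<^sub>R u"] lsnorm_nonneg[of s "b + \<tau> *\<^sub>R u"] by (auto simp: X_def)
  have PX: "P \<tau> = X powr real s" using Pn[of \<tau>] X by (simp add: X_def powr_realpow)
  have "DERIV (\<lambda>\<tau>. P \<tau> powr ((q - real s) / real s)) \<tau> :> (q - real s) / real s * P \<tau> powr ((q - real s) / real s - of_nat 1) * (real s * Q \<tau>)"
    by (rule DERIV_fun_powr[OF dP]) (use X PX in simp)
  from DERIV_cmult[OF DERIV_mult[OF this dQ], of q]
  have deriv: "DERIV (\<lambda>\<tau>. q * (P \<tau> powr ((q - real s) / real s) * Q \<tau>)) \<tau> :>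
     q * ((q - real s) / real s * P \<tau> powr ((q - real s) / real s - of_nat 1) * (real s * Q \<tau>) * Q \<tau> +
       (real s - 1) * R \<tau> * P \<tau> powr ((q - real s) / real s))" .
  have e1: "real s * ((q - real s) / real s - 1) = q - 2 * real s" using s0 by (simp add: field_simps)
  have e2: "real s * ((q - real s) / real s) = q - real s" using s0 by simp
  have a: "P \<tau> powr ((q - real s) / real s - of_nat 1) = X powr (q - 2 * real s)"
    using s0 by (simp add: PX powr_powr e1)
  have b: "P \<tau> powr ((q - real s) / real s) = X powr (q - real s)"
    using s0 by (simp add: PX powr_powr e2)
  have c: "(q - real s) / real s * (real s * Q \<tau>) = (q - real s) * Q \<tau>" using s0 by simp
  have "DERIV (\<lambda>\<tau>. q * (P \<tau> powr ((q - real s) / real s) * Q \<tau>)) \<tau> :>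
     q * ((q - real s) * X powr (q - 2 * real s) * (Q \<tau>)\<^sup>2 + (real s - 1) * X powr (q - real s) * R \<tau>)"
    using deriv unfolding a b using c s0 by (simp add: power2_eq_square mult_ac)
  moreover have "Q \<tau> = odot_pow (b + \<tau> *\<^sub>R u) (s - 1) \<bullet> u" by (simp add: Q_def inner_odot_pow)
  ultimately show ?thesis unfolding line X_def R_def by simp
qed

lemma lsnorm_powr_deriv_line_increment_le_avoiding_zero:
  assumes s: "s \<ge> 2" "even s" and q: "q \<ge> 2" and tt: "t < t'"
    and nz: "\<And>\<tau>. t \<le> \<tau> \<Longrightarrow> \<tau> \<le> t' \<Longrightarrow> b + \<tau> *\<^sub>R u \<noteq> 0"
  shows "lsnorm_powr_deriv s q (b + t' *\<^sub>R u) u - lsnorm_powr_deriv s q (b + t *\<^sub>R u) u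
    \<le> q * (max q (real s) - 1) * (t' - t) * lsnorm s u ^ 2 * (lsnorm s (b + t' *\<^sub>R u) + (t' - t) * lsnorm s u) powr (q - 2)"
proof -
  have s0: "s > 0" using s by auto
  define X where "X = (\<lambda>\<tau>. lsnorm s (b + \<tau> *\<^sub>R u))"
  define Q where "Q = (\<lambda>\<tau>. odot_pow (b + \<tau> *\<^sub>R u) (s - 1) \<bullet> u)"
  define R where "R = (\<lambda>\<tau>. \<Sum>i\<in>UNIV. (b $ i + \<tau> * u $ i) ^ (s - 2) * (u $ i)\<^sup>2)"
  define G' where "G' = (\<lambda>\<tau>. q * ((q - real s) * X \<tau> powr (q - 2 * real s) * (Q \<tau>)\<^sup>2
      + (real s - 1) * X \<tau> powr (q - real s) * R \<tau>))"
  define U where "U = lsnorm s u"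
  have "\<And>\<tau>. t \<le> \<tau> \<Longrightarrow> \<tau> \<le> t' \<Longrightarrow> ((\<lambda>\<tau>. lsnorm_powr_deriv s q (b + \<tau> *\<^sub>R u) u) has_real_derivative G' \<tau>) (at \<tau>)"
    unfolding G'_def X_def Q_def R_def by (rule has_real_derivative_lsnorm_powr_deriv_line[OF s nz])
  from MVT2[OF tt this] obtain z where z: "t < z" "z < t'"
    and mvt: "lsnorm_powr_deriv s q (b + t' *\<^sub>R u) u - lsnorm_powr_deriv s q (b + t *\<^sub>R u) u = (t' - t) * G' z"
    by blast
  have X: "X z > 0"
    using nz[of z] z lsnorm_eq_0_iff[OF s0, of "b + z *\<^sub>R u"] lsnorm_nonneg[of s "b + z *\<^sub>R u"]
    unfolding X_def by auto
  have Qb: "\<bar>Q z\<bar> \<le> X z ^ (s - 1) * U"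
    using abs_inner_odot_pow_le[OF s, of "b + z *\<^sub>R u" u] by (simp add: Q_def X_def U_def)
  have Rb: "R z \<le> X z ^ (s - 2) * U ^ 2"
    using sum_power_minus2_le_lsnorm[OF s, of "b + z *\<^sub>R u" u] by (simp add: R_def X_def U_def)
  have "G' z \<le> q * (max q (real s) - 1) * X z powr (q - 2) * U ^ 2"
    unfolding G'_def by (rule lsnorm_powr_second_deriv_le[OF s(1) q X _ Qb Rb]) (simp add: U_def lsnorm_nonneg)
  also have "\<dots> \<le> q * (max q (real s) - 1) * (lsnorm s (b + t' *\<^sub>R u) + (t' - t) * U) powr (q - 2) * U ^ 2"
  proof -
    have "X z \<le> lsnorm s (b + t' *\<^sub>R u) + (t' - z) * U"
      unfolding X_def U_def by (rule lsnorm_line_le[OF s(1)]) (use z in auto)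
    also have "\<dots> \<le> lsnorm s (b + t' *\<^sub>R u) + (t' - t) * U"
      using z by (auto simp: U_def lsnorm_nonneg intro!: mult_right_mono)
    finally have "X z powr (q - 2) \<le> (lsnorm s (b + t' *\<^sub>R u) + (t' - t) * U) powr (q - 2)"
      using X q by (intro powr_mono2) auto
    moreover have "0 \<le> q * (max q (real s) - 1)" using q by (auto simp: max_def)
    ultimately show ?thesis by (intro mult_right_mono mult_left_mono) auto
  qed
  finally have "(t' - t) * G' z \<le> (t' - t) * (q * (max q (real s) - 1) * (lsnorm s (b + t' *\<^sub>R u) + (t' - t) * U) powr (q - 2) * U ^ 2)"
    using tt by (intro mult_left_mono) auto
  then show ?thesis by (simp add: mvt U_def mult_ac)
qed

lemma lsnorm_powr_deriv_line_increment_le: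
  assumes s: "s \<ge> 2" "even s" and q: "q \<ge> 2" and tt: "t \<le> t'"
  shows "lsnorm_powr_deriv s q (b + t' *\<^sub>R u) u - lsnorm_powr_deriv s q (b + t *\<^sub>R u) u
    \<le> q * (max q (real s) - 1) * (t' - t) * lsnorm s u ^ 2 * (lsnorm s (b + t' *\<^sub>R u) + (t' - t) * lsnorm s u) powr (q - 2)"
proof (cases "\<exists>\<tau>0. t \<le> \<tau>0 \<and> \<tau>0 \<le> t' \<and> b + \<tau>0 *\<^sub>R u = 0")
  case True
  then obtain \<tau>0 where "t \<le> \<tau>0" "\<tau>0 \<le> t'" "b + \<tau>0 *\<^sub>R u = 0" by blast
  then show ?thesis by (rule lsnorm_powr_deriv_line_increment_le_through_zero[OF s q])
next
  case False
  show ?thesis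
  proof (cases "t = t'")
    case True then show ?thesis by simp
  next
    case False
    then have "t < t'" using tt by simp
    then show ?thesis using \<open>\<not> (\<exists>\<tau>0. _)\<close> by (intro lsnorm_powr_deriv_line_increment_le_avoiding_zero[OF s q]) auto
  qed
qed

lemma le_of_slope_bound:
  fixes f F :: "real \<Rightarrow> real"
  assumes slope: "\<And>t t'. 0 \<le> t \<Longrightarrow> t \<le> t' \<Longrightarrow> f t' - f t \<le> (t' - t) * F t'"
    and F_le: "\<And>t. 0 \<le> t \<Longrightarrow> F t \<le> F 0 + C * t"
  shows "f 1 \<le> f 0 + F 0 + C / 2"
proof -
  have grid: "f 1 \<le> f 0 + F 0 + C / 2 * ((real N + 1) / real N)" if N: "N \<ge> 1" for N :: nat
  proof -
    have "f (real k / N) \<le> f 0 + real k / N * F 0 + C / 2 * (real k * (real k + 1)) / (real N)\<^sup>2" for k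
    proof (induction k)
      case 0 then show ?case by simp
    next
      case (Suc k)
      define t t' where "t = real k / N" and "t' = real (Suc k) / N"
      have tt: "0 \<le> t" "t \<le> t'" "t' - t = 1 / N" using N by (auto simp: t_def t'_def divide_simps)
      have "f t' \<le> f t + (t' - t) * (F 0 + C * t')"
        using slope[OF tt(1,2)] F_le[of t'] tt by (smt (verit) mult_left_mono)
      also have "\<dots> \<le> f 0 + t * F 0 + C / 2 * (real k * (real k + 1)) / (real N)\<^sup>2 + (t' - t) * (F 0 + C * t')"
        using Suc.IH by (simp add: t_def)
      also have "\<dots> = f 0 + t' * F 0 + C / 2 * (real (Suc k) * (real (Suc k) + 1)) / (real N)\<^sup>2"
        using N by (simp add: t_def t'_def field_simps power2_eq_square)
      finally show ?case by (simp add: t'_def)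
    qed
    from this[of N] have "f 1 \<le> f 0 + F 0 + C / 2 * (real N * (real N + 1)) / (real N)\<^sup>2"
      using N by simp
    also have "C / 2 * (real N * (real N + 1)) / (real N)\<^sup>2 = C / 2 * ((real N + 1) / real N)"
      using N by (simp add: field_simps power2_eq_square)
    finally show ?thesis by simp
  qed
  have "(\<lambda>n. f 0 + F 0 + C / 2 * (1 + inverse (real (Suc n)))) \<longlonglongrightarrow> f 0 + F 0 + C / 2 * (1 + 0)"
    by (intro tendsto_intros LIMSEQ_inverse_real_of_nat)
  moreover have "f 1 \<le> f 0 + F 0 + C / 2 * (1 + inverse (real (Suc n)))" for n
    using grid[of "Suc n"] by (simp add: field_simps)
  ultimately show ?thesis by (intro LIMSEQ_le_const) auto
qed

text \<open>Smoothness of \<open>|\<cdot>|\<^sub>s\<^sup>2\<close>: along \<open>t \<mapsto> a + t v\<close> its derivative has Lipschitz constant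
  \<open>2 (s - 1) |v|\<^sub>s\<^sup>2\<close>.\<close>
lemma lsnorm_sq_smooth:
  fixes a v :: "real^'d"
  assumes s: "s \<ge> 2" "even s"
  shows "lsnorm s (a + v) ^ 2 \<le> lsnorm s a ^ 2 + lsnorm_powr_deriv s 2 a v + (real s - 1) * lsnorm s v ^ 2"
proof -
  define f where "f = (\<lambda>t. lsnorm s (a + t *\<^sub>R v) powr 2)"
  define F where "F = (\<lambda>t. lsnorm_powr_deriv s 2 (a + t *\<^sub>R v) v)"
  have "f 1 \<le> f 0 + F 0 + 2 * ((real s - 1) * lsnorm s v ^ 2) / 2"
  proof (rule le_of_slope_bound)
    show "f t' - f t \<le> (t' - t) * F t'" for t t'
    proof -
      have "lsnorm s (a + t' *\<^sub>R v) powr 2 + lsnorm_powr_deriv s 2 (a + t' *\<^sub>R v) ((a + t *\<^sub>R v) - (a + t' *\<^sub>R v))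
          \<le> lsnorm s (a + t *\<^sub>R v) powr 2"
        by (rule lsnorm_powr_convex_ineq[OF s]) simp
      moreover have "(a + t *\<^sub>R v) - (a + t' *\<^sub>R v) = (t - t') *\<^sub>R v" by (simp add: algebra_simps)
      ultimately have "f t' + (t - t') * F t' \<le> f t"
        by (simp only: f_def F_def lsnorm_powr_deriv_scale)
      then show ?thesis by (simp add: algebra_simps)
    qed
    show "F t' \<le> F 0 + 2 * ((real s - 1) * lsnorm s v ^ 2) * t'" if "t' \<ge> 0" for t'
    proof -
      have "0 \<le> 2 * ((real s - 1) * lsnorm s v ^ 2) * t'" using s that by simp
      then show ?thesis using lsnorm_powr_deriv_line_increment_le[OF s _ that, of 2 a v] s
        by (auto simp: F_def max_def algebra_simps split: if_splits)
    qed
  qed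
  then show ?thesis by (simp add: f_def F_def lsnorm_nonneg)
qed

section \<open>Integral inequalities\<close>

lemma Youngs_inequality_weak:
  fixes x y p p' :: real
  assumes "p > 1" "p' > 1" "1/p + 1/p' = 1" "x \<ge> 0" "y \<ge> 0"
  shows "x * y \<le> x powr p + y powr p'"
proof -
  have "x * y \<le> x powr p / p + y powr p' / p'" by (rule Youngs_inequality[OF assms])
  also have "\<dots> \<le> x powr p + y powr p'"
    using assms mult_left_mono[of 1 p "x powr p"] mult_left_mono[of 1 p' "y powr p'"]
    by (intro add_mono) (auto simp: divide_le_eq)
  finally show ?thesis .
qed

lemma Holder_inequality_integral:
  fixes f g :: "'a \<Rightarrow> real"
  assumes p: "p > 1" and p': "p' > 1" and pq: "1/p + 1/p' = 1"
    and f[measurable]: "f \<in> borel_measurable M" and g[measurable]: "g \<in> borel_measurable M"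
    and f0: "\<And>x. f x \<ge> 0" and g0: "\<And>x. g x \<ge> 0"
    and fi: "integrable M (\<lambda>x. f x powr p)" and gi: "integrable M (\<lambda>x. g x powr p')"
  shows "integrable M (\<lambda>x. f x * g x)"
    and "(\<integral>x. f x * g x \<partial>M) \<le> (\<integral>x. f x powr p \<partial>M) powr (1/p) * (\<integral>x. g x powr p' \<partial>M) powr (1/p')"
proof -
  show fgi: "integrable M (\<lambda>x. f x * g x)"
  proof (rule Bochner_Integration.integrable_bound[OF Bochner_Integration.integrable_add[OF fi gi]])
    show "AE x in M. norm (f x * g x) \<le> norm (f x powr p + g x powr p')"
      using Youngs_inequality_weak[OF p p' pq f0 g0] f0 g0 by (auto simp: abs_mult)
  qed measurable
  define A where "A = (\<integral>x. f x powr p \<partial>M)"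
  define B where "B = (\<integral>x. g x powr p' \<partial>M)"
  have A0: "A \<ge> 0" "B \<ge> 0" unfolding A_def B_def by (auto intro!: integral_nonneg_AE)
  show "(\<integral>x. f x * g x \<partial>M) \<le> A powr (1/p) * B powr (1/p')"
  proof (cases "A = 0 \<or> B = 0")
    case True
    have "(\<integral>x. f x * g x \<partial>M) = 0"
    proof (rule integral_eq_zero_AE)
      from True show "AE x in M. f x * g x = 0"
      proof
        assume "A = 0"
        then have "AE x in M. f x powr p = 0" unfolding A_def using fi by (subst (asm) integral_nonneg_eq_0_iff_AE) auto
        then show ?thesis by eventually_elim simp
      next
        assume "B = 0"
        then have "AE x in M. g x powr p' = 0" unfolding B_def using gi by (subst (asm) integral_nonneg_eq_0_iff_AE) auto
        then show ?thesis by eventually_elim simp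
      qed
    qed
    then show ?thesis using A0 by simp
  next
    case False
    then have Ap: "A > 0" "B > 0" using A0 by auto
    define a where "a = A powr (1/p)"
    define b where "b = B powr (1/p')"
    have ab: "a > 0" "b > 0" using Ap by (auto simp: a_def b_def)
    have ap: "a powr p = A" using Ap p by (simp add: a_def powr_powr)
    have bp: "b powr p' = B" using Ap p' by (simp add: b_def powr_powr)
    have "(\<integral>x. f x * g x / (a * b) \<partial>M) \<le> (\<integral>x. f x powr p / A / p + g x powr p' / B / p' \<partial>M)"
    proof (rule integral_mono)
      show "integrable M (\<lambda>x. f x * g x / (a * b))" using fgi by simp
      show "integrable M (\<lambda>x. f x powr p / A / p + g x powr p' / B / p')" using fi gi by simp
      fix x
      have "(f x / a) * (g x / b) \<le> (f x / a) powr p / p + (g x / b) powr p' / p'"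
        using f0 g0 ab by (intro Youngs_inequality[OF p p' pq]) auto
      also have "\<dots> = f x powr p / A / p + g x powr p' / B / p'"
        using f0[of x] g0[of x] ab ap bp by (simp add: powr_divide)
      finally show "f x * g x / (a * b) \<le> f x powr p / A / p + g x powr p' / B / p'" by simp
    qed
    also have "\<dots> = A / A / p + B / B / p'"
      using fi gi by (simp add: A_def B_def)
    also have "\<dots> = 1" using Ap pq by simp
    finally have "(\<integral>x. f x * g x \<partial>M) / (a * b) \<le> 1" by simp
    then show ?thesis using ab by (simp add: a_def[symmetric] b_def[symmetric] divide_le_eq)
  qed
qed

lemma powr_add_le_two_powr:
  fixes x y p :: real
  assumes "x \<ge> 0" "y \<ge> 0" "p \<ge> 0"
  shows "(x + y) powr p \<le> 2 powr p * (x powr p + y powr p)"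
proof -
  have "(x + y) powr p \<le> (2 * max x y) powr p" using assms by (intro powr_mono2) auto
  also have "\<dots> = 2 powr p * max x y powr p" using assms by (simp add: powr_mult)
  also have "max x y powr p \<le> x powr p + y powr p" by (auto simp: max_def)
  finally show ?thesis by simp
qed

lemma integrable_powr_add:
  fixes f g :: "'a \<Rightarrow> real"
  assumes [measurable]: "f \<in> borel_measurable M" "g \<in> borel_measurable M"
    and f0: "\<And>x. f x \<ge> 0" and g0: "\<And>x. g x \<ge> 0" and p: "p \<ge> 0"
    and fi: "integrable M (\<lambda>x. f x powr p)" and gi: "integrable M (\<lambda>x. g x powr p)"
  shows "integrable M (\<lambda>x. (f x + g x) powr p)"
proof (rule Bochner_Integration.integrable_bound[OF integrable_mult_right[OF Bochner_Integration.integrable_add[OF fi gi], of "2 powr p"]])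
  show "AE x in M. norm ((f x + g x) powr p) \<le> norm (2 powr p * (f x powr p + g x powr p))"
    using powr_add_le_two_powr[OF f0 g0 p] by auto
qed measurable

lemma Minkowski_inequality_integral:
  fixes f g :: "'a \<Rightarrow> real"
  assumes p: "p \<ge> 1"
    and f[measurable]: "f \<in> borel_measurable M" and g[measurable]: "g \<in> borel_measurable M"
    and f0: "\<And>x. f x \<ge> 0" and g0: "\<And>x. g x \<ge> 0"
    and fi: "integrable M (\<lambda>x. f x powr p)" and gi: "integrable M (\<lambda>x. g x powr p)"
  shows "(\<integral>x. (f x + g x) powr p \<partial>M) powr (1/p) \<le> (\<integral>x. f x powr p \<partial>M) powr (1/p) + (\<integral>x. g x powr p \<partial>M) powr (1/p)"
proof (cases "p = 1")
  case True
  have e: "(f x + g x) powr p = f x powr p + g x powr p" for x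
    using True f0[of x] g0[of x] by simp
  have "(\<integral>x. (f x + g x) powr p \<partial>M) = (\<integral>x. f x powr p \<partial>M) + (\<integral>x. g x powr p \<partial>M)"
    unfolding e by (rule Bochner_Integration.integral_add[OF fi gi])
  then show ?thesis using True f0 g0 fi gi by (simp add: integral_nonneg_AE)
next
  case False
  then have p1: "p > 1" using p by simp
  define p' where "p' = p / (p - 1)"
  have p': "p' > 1" using p1 by (simp add: p'_def)
  have pq: "1/p + 1/p' = 1" using p1 by (simp add: p'_def field_simps)
  define h where "h = (\<lambda>x. (f x + g x) powr (p - 1))"
  have h0: "h x \<ge> 0" for x by (simp add: h_def)
  have hp: "h x powr p' = (f x + g x) powr p" for x
    using p1 by (simp add: h_def powr_powr p'_def)
  have fgi: "integrable M (\<lambda>x. (f x + g x) powr p)"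
    by (rule integrable_powr_add[OF f g f0 g0 _ fi gi]) (use p in auto)
  have hi: "integrable M (\<lambda>x. h x powr p')" using fgi by (simp add: hp)
  have hm[measurable]: "h \<in> borel_measurable M" unfolding h_def by measurable
  have split: "(f x + g x) powr p = f x * h x + g x * h x" for x
  proof (cases "f x + g x = 0")
    case True then have "f x = 0" "g x = 0" using f0[of x] g0[of x] by linarith+
    then show ?thesis by simp
  next
    case False
    then have "f x + g x > 0" using f0[of x] g0[of x] by simp
    then have "(f x + g x) powr p = (f x + g x) * (f x + g x) powr (p - 1)"
    proof -
      assume pos: "f x + g x > 0"
      have "(f x + g x) powr p = (f x + g x) powr (1 + (p - 1))" by simp
      also have "\<dots> = (f x + g x) powr 1 * (f x + g x) powr (p - 1)" by (rule powr_add)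
      finally show ?thesis using pos by simp
    qed
    then show ?thesis by (simp add: h_def distrib_right)
  qed
  define S where "S = (\<integral>x. (f x + g x) powr p \<partial>M)"
  have S0: "S \<ge> 0" unfolding S_def by (auto intro!: integral_nonneg_AE)
  have "S = (\<integral>x. f x * h x \<partial>M) + (\<integral>x. g x * h x \<partial>M)"
    unfolding S_def split
    by (rule Bochner_Integration.integral_add; rule Holder_inequality_integral(1)[OF p1 p' pq]) (use f0 g0 h0 fi gi hi in auto)
  also have "\<dots> \<le> (\<integral>x. f x powr p \<partial>M) powr (1/p) * (\<integral>x. h x powr p' \<partial>M) powr (1/p')
       + (\<integral>x. g x powr p \<partial>M) powr (1/p) * (\<integral>x. h x powr p' \<partial>M) powr (1/p')"
    by (intro add_mono Holder_inequality_integral(2)[OF p1 p' pq]) (use f0 g0 h0 fi gi hi in auto)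
  also have "(\<integral>x. h x powr p' \<partial>M) = S" by (simp add: hp S_def)
  finally have *: "S \<le> ((\<integral>x. f x powr p \<partial>M) powr (1/p) + (\<integral>x. g x powr p \<partial>M) powr (1/p)) * S powr (1/p')"
    by (simp add: distrib_right)
  show ?thesis
  proof (cases "S = 0")
    case True then show ?thesis by (simp add: S_def[symmetric])
  next
    case False
    then have Sp: "S > 0" using S0 by simp
    have "S = S powr (1/p) * S powr (1/p')" using Sp pq by (simp add: powr_add[symmetric])
    with * have "S powr (1/p) * S powr (1/p') \<le> ((\<integral>x. f x powr p \<partial>M) powr (1/p) + (\<integral>x. g x powr p \<partial>M) powr (1/p)) * S powr (1/p')"
      by simp
    then have "S powr (1/p) \<le> (\<integral>x. f x powr p \<partial>M) powr (1/p) + (\<integral>x. g x powr p \<partial>M) powr (1/p)"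
      using Sp by (simp add: mult_le_cancel_right)
    then show ?thesis by (simp add: S_def)
  qed
qed

lemma borel_measurable_vec_nth[measurable]: "(\<lambda>x::real^'d. x $ i) \<in> borel_measurable borel"
  by (intro borel_measurable_continuous_onI linear_continuous_on bounded_linear_vec_nth)

lemma borel_measurable_lsnorm[measurable]: "lsnorm s \<in> borel_measurable (borel :: (real^'d) measure)"
proof -
  have "lsnorm s = (\<lambda>v::real^'d. (\<Sum>i\<in>UNIV. \<bar>v $ i\<bar> ^ s) powr (1 / real s))"
    by (simp add: lsnorm_def fun_eq_iff)
  also have "\<dots> \<in> borel_measurable borel" by measurable
  finally show ?thesis .
qed

lemma borel_measurable_lsnorm_comp[measurable]: "f \<in> borel_measurable M \<Longrightarrow> (\<lambda>x. lsnorm s (f x :: real^'d)) \<in> borel_measurable M"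
  by (rule measurable_compose[OF _ borel_measurable_lsnorm])

lemma integrable_lsnorm_powr_add:
  fixes V W :: "'a \<Rightarrow> real^'d"
  assumes s: "s \<ge> 2" and q: "q \<ge> 0"
    and [measurable]: "V \<in> borel_measurable M" "W \<in> borel_measurable M"
    and Vi: "integrable M (\<lambda>x. lsnorm s (V x) powr q)" and Wi: "integrable M (\<lambda>x. lsnorm s (W x) powr q)"
  shows "integrable M (\<lambda>x. lsnorm s (V x + W x) powr q)"
proof (rule Bochner_Integration.integrable_bound[OF integrable_powr_add[OF _ _ _ _ q Vi Wi]])
  show "AE x in M. norm (lsnorm s (V x + W x) powr q) \<le> norm ((lsnorm s (V x) + lsnorm s (W x)) powr q)"
  proof (intro AE_I2)
    fix x
    have "lsnorm s (V x + W x) \<le> lsnorm s (V x) + lsnorm s (W x)" by (rule lsnorm_triangle[OF s])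
    then show "norm (lsnorm s (V x + W x) powr q) \<le> norm ((lsnorm s (V x) + lsnorm s (W x)) powr q)"
      using q by (auto simp: lsnorm_nonneg intro!: powr_mono2)
  qed
qed (auto simp: lsnorm_nonneg)

lemma borel_measurable_lsnorm_powr_deriv[measurable]:
  fixes f g :: "'a \<Rightarrow> real^'d"
  assumes [measurable]: "f \<in> borel_measurable M" "g \<in> borel_measurable M"
  shows "(\<lambda>x. lsnorm_powr_deriv s q (f x) (g x)) \<in> borel_measurable M"
  unfolding lsnorm_powr_deriv_def inner_odot_pow by measurable

lemma Youngs_inequality_powr:
  fixes x y q :: real
  assumes q: "q > 1" and x: "x \<ge> 0" and y: "y \<ge> 0"
  shows "x powr (q - 1) * y \<le> x powr q + y powr q"
proof -
  have p: "q / (q - 1) > 1" using q by simp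
  have pq: "1 / (q / (q - 1)) + 1 / q = 1" using q by (simp add: field_simps)
  have "x powr (q - 1) * y \<le> (x powr (q - 1)) powr (q / (q - 1)) + y powr q"
    by (rule Youngs_inequality_weak[OF p q pq]) (use y in auto)
  also have "(x powr (q - 1)) powr (q / (q - 1)) = x powr q" using q by (simp add: powr_powr)
  finally show ?thesis .
qed

lemma lq_norm_sq:
  assumes "\<And>x. f x \<ge> 0"
  shows "(lq_norm M q f)\<^sup>2 = (\<integral>x. f x powr q \<partial>M) powr (2/q)"
proof -
  define I where "I = (\<integral>x. f x powr q \<partial>M)"
  have "(I powr (1/q))\<^sup>2 = I powr (2/q)"
    by (simp add: powr_of_nat_nonneg[of 2, simplified, symmetric] powr_powr)
  moreover have "lq_norm M q f = I powr (1/q)" using assms by (simp add: lq_norm_def I_def)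
  ultimately show ?thesis by (simp add: I_def)
qed

lemma lq_norm_lsnorm_sq:
  "(lq_norm M q (\<lambda>x. lsnorm s (V x)))\<^sup>2 = (\<integral>x. lsnorm s (V x) powr q \<partial>M) powr (2/q)"
  by (rule lq_norm_sq) (rule lsnorm_nonneg)

lemma lq_norm_nonneg: "lq_norm M q f \<ge> 0"
  by (simp add: lq_norm_def)

lemma lq_norm_lsnorm_add_le:
  fixes V W :: "'a \<Rightarrow> real^'d"
  assumes s: "s \<ge> 2" and q: "q \<ge> 1"
    and [measurable]: "V \<in> borel_measurable M" "W \<in> borel_measurable M"
    and Vi: "integrable M (\<lambda>x. lsnorm s (V x) powr q)" and Wi: "integrable M (\<lambda>x. lsnorm s (W x) powr q)"
  shows "lq_norm M q (\<lambda>x. lsnorm s (V x + W x))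
       \<le> lq_norm M q (\<lambda>x. lsnorm s (V x)) + lq_norm M q (\<lambda>x. lsnorm s (W x))"
proof -
  have sum_int: "integrable M (\<lambda>x. (lsnorm s (V x) + lsnorm s (W x)) powr q)"
    by (rule integrable_powr_add) (use q Vi Wi in \<open>auto simp: lsnorm_nonneg\<close>)
  have "(\<integral>x. lsnorm s (V x + W x) powr q \<partial>M) \<le> (\<integral>x. (lsnorm s (V x) + lsnorm s (W x)) powr q \<partial>M)"
  proof (rule integral_mono[OF integrable_lsnorm_powr_add[OF s _ _ _ Vi Wi] sum_int])
    show "lsnorm s (V x + W x) powr q \<le> (lsnorm s (V x) + lsnorm s (W x)) powr q" for x
      using q lsnorm_triangle[OF s, of "V x" "W x"] by (intro powr_mono2) (auto simp: lsnorm_nonneg)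
  qed (use q in auto)
  then have "(\<integral>x. lsnorm s (V x + W x) powr q \<partial>M) powr (1/q)
      \<le> (\<integral>x. (lsnorm s (V x) + lsnorm s (W x)) powr q \<partial>M) powr (1/q)"
    using q by (intro powr_mono2) (auto intro!: integral_nonneg_AE)
  also have "\<dots> \<le> (\<integral>x. lsnorm s (V x) powr q \<partial>M) powr (1/q) + (\<integral>x. lsnorm s (W x) powr q \<partial>M) powr (1/q)"
    by (rule Minkowski_inequality_integral) (use q Vi Wi in \<open>auto simp: lsnorm_nonneg\<close>)
  finally show ?thesis by (simp add: lq_norm_def lsnorm_nonneg)
qed

lemma lq_norm_lsnorm_scaleR:
  assumes s: "s > 0" and q: "q > 0"
  shows "lq_norm M q (\<lambda>x. lsnorm s (c *\<^sub>R V x)) = \<bar>c\<bar> * lq_norm M q (\<lambda>x. lsnorm s (V x))"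
proof -
  have "(\<integral>x. lsnorm s (V x) powr q \<partial>M) \<ge> 0" by (intro integral_nonneg_AE) auto
  then show ?thesis
    using q by (simp add: lq_norm_def lsnorm_scale[OF s] lsnorm_nonneg powr_mult powr_powr)
qed

lemma (in prob_space) lq_norm_const: "q > 0 \<Longrightarrow> lq_norm M q (\<lambda>_. c) = \<bar>c\<bar>"
  by (simp add: lq_norm_def prob_space powr_powr)

lemma lsnorm_le_one_plus:
  assumes q: "q \<ge> 1"
  shows "lsnorm s v \<le> 1 + lsnorm s v powr q"
proof (cases "lsnorm s v \<le> 1")
  case True
  have "0 \<le> lsnorm s v powr q" by simp
  with True show ?thesis by linarith
next
  case False
  then have "lsnorm s v powr 1 \<le> lsnorm s v powr q" using q by (intro powr_mono) auto
  then show ?thesis using False by simp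
qed

lemma integrable_of_lsnorm_powr:
  fixes V :: "'x \<Rightarrow> real^'d"
  assumes P: "prob_space P" and s: "s \<ge> 2" and q: "q \<ge> 1"
    and V[measurable]: "V \<in> borel_measurable P"
    and Vi: "integrable P (\<lambda>x. lsnorm s (V x) powr q)"
  shows "integrable P V"
proof -
  interpret prob_space P by (rule P)
  show ?thesis
  proof (rule Bochner_Integration.integrable_bound)
    show "integrable P (\<lambda>x. real CARD('d) * (1 + lsnorm s (V x) powr q))" using Vi by auto
    show "AE x in P. norm (V x) \<le> norm (real CARD('d) * (1 + lsnorm s (V x) powr q))"
    proof (intro AE_I2)
      fix x
      have "norm (V x) \<le> (\<Sum>i\<in>UNIV. \<bar>V x $ i\<bar>)" by (rule norm_le_l1_cart)
      also have "\<dots> \<le> (\<Sum>i\<in>(UNIV::'d set). 1 + lsnorm s (V x) powr q)"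
      proof (intro sum_mono)
        fix i
        have "\<bar>V x $ i\<bar> \<le> lsnorm s (V x)" using s by (intro abs_vec_nth_le_lsnorm) auto
        then show "\<bar>V x $ i\<bar> \<le> 1 + lsnorm s (V x) powr q" using lsnorm_le_one_plus[OF q, of s "V x"] by linarith
      qed
      also have "\<dots> = real CARD('d) * (1 + lsnorm s (V x) powr q)" by simp
      finally show "norm (V x) \<le> norm (real CARD('d) * (1 + lsnorm s (V x) powr q))" by simp
    qed
  qed measurable
qed

lemma lsnorm_integral_le:
  fixes Z :: "'x \<Rightarrow> real^'d"
  assumes P: "prob_space P" and s: "s \<ge> 2" "even s" and q: "q \<ge> 2"
    and Z[measurable]: "Z \<in> borel_measurable P"
    and Zi: "integrable P (\<lambda>x. lsnorm s (Z x) powr q)"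
  shows "lsnorm s (\<integral>x. Z x \<partial>P) \<le> lq_norm P q (\<lambda>x. lsnorm s (Z x))"
proof -
  interpret prob_space P by (rule P)
  have s0: "s > 0" using s by simp
  have ZI: "integrable P Z" by (rule integrable_of_lsnorm_powr[OF P s(1) _ Z Zi]) (use q in auto)
  define w where "w = (\<integral>x. Z x \<partial>P)"
  have NZi: "integrable P (\<lambda>x. lsnorm s (Z x))"
    using ZI lsnorm_le_one_plus
  proof -
    show ?thesis
    proof (rule Bochner_Integration.integrable_bound)
      show "integrable P (\<lambda>x. 1 + lsnorm s (Z x) powr q)" using Zi by auto
      show "AE x in P. norm (lsnorm s (Z x)) \<le> norm (1 + lsnorm s (Z x) powr q)"
        using lsnorm_le_one_plus[of q s] q by (auto simp: lsnorm_nonneg)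
    qed measurable
  qed
  have norm_mean_le: "lsnorm s w \<le> (\<integral>x. lsnorm s (Z x) \<partial>P)"
  proof -
    have "lsnorm s w ^ s = odot_pow w (s - 1) \<bullet> w" by (rule inner_odot_pow_self[OF s0 s(2), symmetric])
    also have "\<dots> = (\<integral>x. odot_pow w (s - 1) \<bullet> Z x \<partial>P)"
      unfolding w_def by (rule integral_bounded_linear[OF bounded_linear_inner_right ZI, symmetric])
    also have "\<dots> \<le> (\<integral>x. lsnorm s w ^ (s - 1) * lsnorm s (Z x) \<partial>P)"
    proof (rule integral_mono)
      show "integrable P (\<lambda>x. odot_pow w (s - 1) \<bullet> Z x)"
        by (rule integrable_bounded_linear[OF bounded_linear_inner_right ZI])
      show "integrable P (\<lambda>x. lsnorm s w ^ (s - 1) * lsnorm s (Z x))" using NZi by simp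
      fix x show "odot_pow w (s - 1) \<bullet> Z x \<le> lsnorm s w ^ (s - 1) * lsnorm s (Z x)"
        by (rule inner_odot_pow_le[OF s])
    qed
    also have "\<dots> = lsnorm s w ^ (s - 1) * (\<integral>x. lsnorm s (Z x) \<partial>P)" by simp
    finally have *: "lsnorm s w ^ (s - 1) * lsnorm s w \<le> lsnorm s w ^ (s - 1) * (\<integral>x. lsnorm s (Z x) \<partial>P)"
      using s0 by simp
    show ?thesis
    proof (cases "lsnorm s w = 0")
      case True then show ?thesis by (simp add: integral_nonneg_AE lsnorm_nonneg)
    next
      case False
      then have "lsnorm s w ^ (s - 1) > 0" using lsnorm_nonneg[of s w] by simp
      with * show ?thesis by simp
    qed
  qed
  have mean_le_Lq: "(\<integral>x. lsnorm s (Z x) \<partial>P) \<le> (\<integral>x. lsnorm s (Z x) powr q \<partial>P) powr (1/q)"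
  proof -
    have p: "q > 1" "q / (q - 1) > 1" using q by auto
    have pq: "1 / q + 1 / (q / (q - 1)) = 1" using q by (simp add: field_simps)
    have "(\<integral>x. lsnorm s (Z x) * 1 \<partial>P) \<le> (\<integral>x. lsnorm s (Z x) powr q \<partial>P) powr (1/q) * (\<integral>x. 1 powr (q / (q - 1)) \<partial>P) powr (1 / (q / (q - 1)))"
      by (rule Holder_inequality_integral(2)[OF p pq]) (use Zi in \<open>auto simp: lsnorm_nonneg\<close>)
    then show ?thesis by (simp add: prob_space)
  qed
  show ?thesis using norm_mean_le mean_le_Lq by (simp add: w_def lq_norm_def lsnorm_nonneg)
qed

lemma Holder_inequality_moment:
  fixes A B :: "'a \<Rightarrow> real"
  assumes q: "q \<ge> 2" and [measurable]: "A \<in> borel_measurable M" "B \<in> borel_measurable M"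
    and A0: "\<And>x. A x \<ge> 0" and B0: "\<And>x. B x \<ge> 0"
    and Ai: "integrable M (\<lambda>x. A x powr q)" and Bi: "integrable M (\<lambda>x. B x powr q)"
    and Bpos: "(\<integral>x. B x powr q \<partial>M) > 0"
  shows "integrable M (\<lambda>x. A x ^ 2 * B x powr (q - 2))"
    and "(\<integral>x. A x ^ 2 * B x powr (q - 2) \<partial>M) \<le> (\<integral>x. A x powr q \<partial>M) powr (2/q) * (\<integral>x. B x powr q \<partial>M) powr ((q - 2)/q)"
proof -
  have A2: "A x ^ 2 = A x powr 2" for x using A0[of x] by (simp add: powr_of_nat_nonneg)
  have A2f: "(\<lambda>x. A x ^ 2) = (\<lambda>x. A x powr 2)" using A2 by auto
  have "integrable M (\<lambda>x. A x ^ 2 * B x powr (q - 2)) \<and>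
      (\<integral>x. A x ^ 2 * B x powr (q - 2) \<partial>M) \<le> (\<integral>x. A x powr q \<partial>M) powr (2/q) * (\<integral>x. B x powr q \<partial>M) powr ((q - 2)/q)"
  proof (cases "q = 2")
    case True
    have Ai2: "integrable M (\<lambda>x. A x ^ 2)" using Ai True by (simp only: A2f)
    have b1: "A x ^ 2 * B x powr (q - 2) \<le> A x ^ 2" for x
      using True by (cases "B x = 0") auto
    have i: "integrable M (\<lambda>x. A x ^ 2 * B x powr (q - 2))"
    proof (rule Bochner_Integration.integrable_bound[OF Ai2])
      show "AE x in M. norm (A x ^ 2 * B x powr (q - 2)) \<le> norm (A x ^ 2)"
        using b1 by (auto simp: True)
    qed measurable
    have "(\<integral>x. A x ^ 2 * B x powr (q - 2) \<partial>M) \<le> (\<integral>x. A x ^ 2 \<partial>M)"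
      by (intro integral_mono[OF i Ai2] b1)
    also have "(\<integral>x. A x ^ 2 \<partial>M) = (\<integral>x. A x powr q \<partial>M)" using True by (simp only: A2f)
    also have "\<dots> = (\<integral>x. A x powr q \<partial>M) powr (2/q) * (\<integral>x. B x powr q \<partial>M) powr ((q - 2)/q)"
    proof -
      have "(\<integral>x. A x powr q \<partial>M) \<ge> 0" by (intro integral_nonneg_AE) auto
      then show ?thesis using True Bpos by simp
    qed
    finally show ?thesis using i by simp
  next
    case False
    then have q2: "q > 2" using q by simp
    have p: "q / 2 > 1" "q / (q - 2) > 1" using q2 by auto
    have pq: "1 / (q / 2) + 1 / (q / (q - 2)) = 1" using q2 by (simp add: field_simps)
    have e1: "(A x ^ 2) powr (q / 2) = A x powr q" for x
    proof -
      have "(A x ^ 2) powr (q / 2) = (A x powr 2) powr (q / 2)" by (simp only: A2)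
      also have "\<dots> = A x powr q" by (subst powr_powr) simp
      finally show ?thesis .
    qed
    have e2: "(B x powr (q - 2)) powr (q / (q - 2)) = B x powr q" for x using q2 by (subst powr_powr) simp
    have i1: "integrable M (\<lambda>x. (A x ^ 2) powr (q / 2))" using Ai by (simp only: e1)
    have i2: "integrable M (\<lambda>x. (B x powr (q - 2)) powr (q / (q - 2)))" using Bi by (simp only: e2)
    note H = Holder_inequality_integral[OF p pq, of "\<lambda>x. A x ^ 2" M "\<lambda>x. B x powr (q - 2)"]
    have "integrable M (\<lambda>x. A x ^ 2 * B x powr (q - 2))"
      using H(1)[OF _ _ _ _ i1 i2] by auto
    moreover have "(\<integral>x. A x ^ 2 * B x powr (q - 2) \<partial>M) \<le> (\<integral>x. A x powr q \<partial>M) powr (2/q) * (\<integral>x. B x powr q \<partial>M) powr ((q - 2)/q)"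
    proof -
      have "(\<integral>x. A x ^ 2 * B x powr (q - 2) \<partial>M) \<le> (\<integral>x. (A x ^ 2) powr (q / 2) \<partial>M) powr (1 / (q / 2)) *
            (\<integral>x. (B x powr (q - 2)) powr (q / (q - 2)) \<partial>M) powr (1 / (q / (q - 2)))"
        using H(2)[OF _ _ _ _ i1 i2] by auto
      also have "\<dots> = (\<integral>x. A x powr q \<partial>M) powr (2/q) * (\<integral>x. B x powr q \<partial>M) powr ((q - 2)/q)"
        by (simp only: e1 e2) simp
      finally show ?thesis .
    qed
    ultimately show ?thesis by simp
  qed
  then show "integrable M (\<lambda>x. A x ^ 2 * B x powr (q - 2))"
    and "(\<integral>x. A x ^ 2 * B x powr (q - 2) \<partial>M) \<le> (\<integral>x. A x powr q \<partial>M) powr (2/q) * (\<integral>x. B x powr q \<partial>M) powr ((q - 2)/q)"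
    by auto
qed

section \<open>Rio's inequality\<close>

lemma powr_le_tangent:
  fixes x y r :: real
  assumes x: "x > 0" and y: "y \<ge> 0" and r: "0 < r" "r \<le> 1"
  shows "y powr r \<le> x powr r + r * x powr (r - 1) * (y - x)"
proof (cases "y = 0 \<or> r = 1")
  case True
  then show ?thesis
  proof
    assume "y = 0"
    have "r * x powr (r - 1) * x = r * x powr r" using x by (simp add: powr_diff)
    then show ?thesis using \<open>y = 0\<close> r x by (simp add: algebra_simps)
  next
    assume "r = 1" then show ?thesis using x y by simp
  qed
next
  case False
  then have yp: "y > 0" and r1: "r < 1" using y r by auto
  have "(y / x) powr r * 1 powr (1 - r) \<le> r * (y / x) + (1 - r) * 1"
    by (rule Youngs_inequality_0) (use r r1 x yp in auto)
  then have "(y / x) powr r \<le> r * (y / x) + (1 - r)" by simp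
  then have "x powr r * (y / x) powr r \<le> x powr r * (r * (y / x) + (1 - r))"
    by (intro mult_left_mono) auto
  moreover have "x powr r * (y / x) powr r = y powr r" using x yp by (simp add: powr_divide)
  moreover have "x powr r * (r * (y / x) + (1 - r)) = x powr r + r * x powr (r - 1) * (y - x)"
  proof -
    have "x powr r * (y / x) = x powr (r - 1) * y" using x by (simp add: powr_diff)
    moreover have "x powr r = x powr (r - 1) * x" using x by (simp add: powr_diff)
    ultimately show ?thesis by (simp add: algebra_simps)
  qed
  ultimately show ?thesis by simp
qed

lemma powr_shift_ratio_le:
  fixes y c0 a q :: real
  assumes q: "q \<ge> 2" and c0: "c0 > 0" and y: "y \<ge> c0" and a: "a \<ge> 0"
  shows "y powr (2 - q) * (y + a) powr (q - 2) \<le> (1 + a / c0) powr (q - 2)"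
proof -
  have yp: "y > 0" using c0 y by simp
  have "y powr (2 - q) * (y + a) powr (q - 2) = (y + a) powr (q - 2) / y powr (q - 2)"
  proof -
    have "y powr (2 - q) = inverse (y powr (q - 2))" using powr_minus[of y "q - 2"] by simp
    then show ?thesis by (simp add: divide_inverse mult.commute)
  qed
  also have "\<dots> = ((y + a) / y) powr (q - 2)" using yp a by (simp add: powr_divide)
  also have "(y + a) / y = 1 + a / y" using yp by (simp add: field_simps)
  also have "(1 + a / y) powr (q - 2) \<le> (1 + a / c0) powr (q - 2)"
    using q a c0 y yp by (intro powr_mono2) (auto intro!: divide_left_mono)
  finally show ?thesis .
qed

text \<open>An abstract form of the integration argument behind Rio's inequality. Think of
  \<open>\<Phi> t = E |b + t U|\<^sub>s\<^sup>q\<close> on \<open>[0, 1]\<close> with derivative \<open>D\<close>: the hypotheses are convexity of \<open>\<Phi>\<close>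
  (tangent lines lie below), a Lipschitz-type bound on \<open>D\<close> and the Minkowski bound for
  \<open>\<Phi>\<^sup>1\<^sup>/\<^sup>q\<close>. Summing the resulting increments of \<open>\<Phi>\<^sup>2\<^sup>/\<^sup>q\<close> over a grid of mesh \<open>1/N\<close> and
  letting \<open>N \<rightarrow> \<infinity>\<close> bounds \<open>\<Phi> 1\<^sup>2\<^sup>/\<^sup>q - \<Phi> 0\<^sup>2\<^sup>/\<^sup>q\<close> by \<open>c \<sigma>\<^sup>2\<close>.\<close>
locale moment_path =
  fixes \<Phi> D :: "real \<Rightarrow> real" and q c \<sigma> :: real
  assumes q: "q \<ge> 2" and c: "c \<ge> 0" and \<sigma>: "\<sigma> \<ge> 0" and \<Phi>0: "\<Phi> 0 > 0" and D0: "D 0 = 0"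
    and tangent: "\<And>t t'. 0 \<le> t \<Longrightarrow> t \<le> 1 \<Longrightarrow> 0 \<le> t' \<Longrightarrow> t' \<le> 1 \<Longrightarrow> \<Phi> t + (t' - t) * D t \<le> \<Phi> t'"
    and D_increment: "\<And>t t'. 0 \<le> t \<Longrightarrow> t \<le> t' \<Longrightarrow> t' \<le> 1 \<Longrightarrow>
               D t' - D t \<le> q * c * (t' - t) * \<sigma>\<^sup>2 * (\<Phi> t' powr (1/q) + (t' - t) * \<sigma>) powr (q - 2)"
    and root_increment: "\<And>t t'. 0 \<le> t \<Longrightarrow> t \<le> t' \<Longrightarrow> t' \<le> 1 \<Longrightarrow>
               \<Phi> t' powr (1/q) \<le> \<Phi> t powr (1/q) + (t' - t) * \<sigma>"
begin

lemma \<Phi>_ge_\<Phi>0: "0 \<le> t \<Longrightarrow> t \<le> 1 \<Longrightarrow> \<Phi> 0 \<le> \<Phi> t"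
  using tangent[of 0 t] D0 by simp

lemma \<Phi>_pos: "0 \<le> t \<Longrightarrow> t \<le> 1 \<Longrightarrow> \<Phi> t > 0"
  using \<Phi>_ge_\<Phi>0 \<Phi>0 by fastforce

lemma D_nonneg:
  assumes "0 \<le> t" "t \<le> 1"
  shows "D t \<ge> 0"
proof (cases "t = 0")
  case True then show ?thesis using D0 by simp
next
  case False
  have "\<Phi> t + (0 - t) * D t \<le> \<Phi> 0" using tangent[of t 0] assms by simp
  then have "t * D t \<ge> 0" using \<Phi>_ge_\<Phi>0[OF assms] by simp
  then show ?thesis using False assms by (simp add: zero_le_mult_iff)
qed

lemma \<Phi>_mono: "0 \<le> t \<Longrightarrow> t \<le> t' \<Longrightarrow> t' \<le> 1 \<Longrightarrow> \<Phi> t \<le> \<Phi> t'"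
  using tangent[of t t'] D_nonneg[of t] by (smt (verit) mult_nonneg_nonneg)

lemma D_grid_bound:
  fixes N k :: nat
  assumes N: "N \<ge> 1" and k: "k \<le> N"
  shows "D (real k / N) \<le> q * c * \<sigma>\<^sup>2 * (real k / N) * (\<Phi> (real k / N) powr (1/q) + \<sigma> / N) powr (q - 2)"
  using k
proof (induction k)
  case 0 then show ?case using D0 by simp
next
  case (Suc k)
  define t where "t = real k / N"
  define t' where "t' = real (Suc k) / N"
  define K where "K = q * c * \<sigma>\<^sup>2"
  have K: "K \<ge> 0" using q c by (simp add: K_def)
  have tt: "0 \<le> t" "t \<le> t'" "t' \<le> 1" "t' - t = 1 / N"
    using Suc.prems N by (auto simp: t_def t'_def divide_simps)
  have "D t' \<le> D t + K * (1 / N) * (\<Phi> t' powr (1/q) + \<sigma> / N) powr (q - 2)"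
    using D_increment[OF tt(1-3)] tt(4) by (simp add: K_def mult_ac)
  moreover have "K * t * (\<Phi> t powr (1/q) + \<sigma> / N) powr (q - 2) \<le> K * t * (\<Phi> t' powr (1/q) + \<sigma> / N) powr (q - 2)"
    using \<Phi>_mono[OF tt(1-3)] \<Phi>_pos[of t] tt q K \<sigma>
    by (intro mult_left_mono powr_mono2 add_right_mono) auto
  moreover have "D t \<le> K * t * (\<Phi> t powr (1/q) + \<sigma> / N) powr (q - 2)"
    using Suc by (simp add: t_def K_def)
  ultimately have "D t' \<le> K * (t + 1 / N) * (\<Phi> t' powr (1/q) + \<sigma> / N) powr (q - 2)"
    by (simp add: algebra_simps)
  also have "t + 1 / N = t'" using tt(4) by simp
  finally show ?case by (simp add: t'_def K_def)
qed

lemma grid_step: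
  fixes N k :: nat
  assumes N: "N \<ge> 1" and k: "Suc k \<le> N"
  shows "\<Phi> (real (Suc k) / N) powr (2/q) \<le> \<Phi> (real k / N) powr (2/q)
           + 2 * c * \<sigma>\<^sup>2 * (1 + 2 * (\<sigma> / N) / \<Phi> 0 powr (1/q)) powr (q - 2) * (1 / N) * (real (Suc k) / N)"
proof -
  have q0: "q > 0" using q by simp
  define t where "t = real k / N"
  define t' where "t' = real (Suc k) / N"
  define \<delta> where "\<delta> = 1 / real N"
  define y where "y = \<Phi> t powr (1/q)"
  define c0 where "c0 = \<Phi> 0 powr (1/q)"
  define K where "K = q * c * \<sigma>\<^sup>2"
  have K: "K \<ge> 0" using q c by (simp add: K_def)
  have tt: "0 \<le> t" "t \<le> t'" "t' \<le> 1" "t' = t + \<delta>" "\<delta> > 0"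
    using k N by (auto simp: t_def t'_def \<delta>_def divide_simps)
  have c0: "c0 > 0" using \<Phi>0 by (simp add: c0_def)
  have yc0: "y \<ge> c0" unfolding y_def c0_def using \<Phi>_ge_\<Phi>0[of t] \<Phi>0 q tt by (intro powr_mono2) auto
  have dPhi: "\<Phi> t' - \<Phi> t \<le> \<delta> * D t'"
    using tangent[of t' t] tt by (simp add: algebra_simps)
  have "D t' \<le> K * t' * (\<Phi> t' powr (1/q) + \<delta> * \<sigma>) powr (q - 2)"
    using D_grid_bound[OF N k] by (simp add: t'_def K_def \<delta>_def)
  also have "\<dots> \<le> K * t' * (y + 2 * (\<delta> * \<sigma>)) powr (q - 2)"
    using root_increment[of t t'] K tt q \<sigma> by (intro mult_left_mono powr_mono2) (auto simp: y_def)
  finally have Db: "D t' \<le> K * t' * (y + 2 * (\<delta> * \<sigma>)) powr (q - 2)" .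
  have "\<Phi> t' powr (2/q) \<le> \<Phi> t powr (2/q) + (2/q) * \<Phi> t powr (2/q - 1) * (\<Phi> t' - \<Phi> t)"
    using \<Phi>_pos[of t] \<Phi>_pos[of t'] tt q by (intro powr_le_tangent) auto
  also have "\<dots> \<le> \<Phi> t powr (2/q) + (2/q) * \<Phi> t powr (2/q - 1) * (\<delta> * (K * t' * (y + 2 * (\<delta> * \<sigma>)) powr (q - 2)))"
    using dPhi Db tt q by (intro add_left_mono mult_left_mono order.trans[OF dPhi]) auto
  also have "(2/q) * \<Phi> t powr (2/q - 1) * (\<delta> * (K * t' * (y + 2 * (\<delta> * \<sigma>)) powr (q - 2)))
      = 2 * c * \<sigma>\<^sup>2 * \<delta> * t' * (y powr (2 - q) * (y + 2 * (\<delta> * \<sigma>)) powr (q - 2))"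
  proof -
    have "\<Phi> t powr (2/q - 1) = y powr (2 - q)"
      unfolding y_def using q0 by (simp add: powr_powr field_simps)
    then show ?thesis using q0 by (simp add: K_def field_simps)
  qed
  also have "\<dots> \<le> 2 * c * \<sigma>\<^sup>2 * \<delta> * t' * (1 + 2 * (\<delta> * \<sigma>) / c0) powr (q - 2)"
    using c tt \<sigma> by (intro mult_left_mono powr_shift_ratio_le[OF q c0 yc0]) auto
  finally show ?thesis by (simp add: t_def t'_def \<delta>_def c0_def mult_ac)
qed

lemma grid_bound:
  fixes N :: nat
  assumes N: "N \<ge> 1"
  shows "\<Phi> 1 powr (2/q) \<le> \<Phi> 0 powr (2/q)
           + c * \<sigma>\<^sup>2 * ((1 + 2 * (\<sigma> / N) / \<Phi> 0 powr (1/q)) powr (q - 2) * ((real N + 1) / N))"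
proof -
  define E where "E = (1 + 2 * (\<sigma> / N) / \<Phi> 0 powr (1/q)) powr (q - 2)"
  have "\<Phi> (real k / N) powr (2/q) \<le> \<Phi> 0 powr (2/q) + c * \<sigma>\<^sup>2 * E * (real k * (real k + 1)) / (real N)\<^sup>2"
    if "k \<le> N" for k
    using that
  proof (induction k)
    case 0 then show ?case by simp
  next
    case (Suc k)
    then have "\<Phi> (real (Suc k) / N) powr (2/q) \<le> \<Phi> 0 powr (2/q) + c * \<sigma>\<^sup>2 * E * (real k * (real k + 1)) / (real N)\<^sup>2
        + 2 * c * \<sigma>\<^sup>2 * E * (1 / N) * (real (Suc k) / N)"
      using grid_step[OF N Suc.prems] by (simp add: E_def)
    also have "\<dots> = \<Phi> 0 powr (2/q) + c * \<sigma>\<^sup>2 * E * (real (Suc k) * (real (Suc k) + 1)) / (real N)\<^sup>2"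
      using N by (simp add: field_simps power2_eq_square)
    finally show ?case .
  qed
  from this[of N] have "\<Phi> 1 powr (2/q) \<le> \<Phi> 0 powr (2/q) + c * \<sigma>\<^sup>2 * E * (real N * (real N + 1)) / (real N)\<^sup>2"
    using N by simp
  also have "c * \<sigma>\<^sup>2 * E * (real N * (real N + 1)) / (real N)\<^sup>2 = c * \<sigma>\<^sup>2 * (E * ((real N + 1) / real N))"
    using N by (simp add: field_simps power2_eq_square)
  finally show ?thesis by (simp add: E_def)
qed

theorem bound: "\<Phi> 1 powr (2/q) \<le> \<Phi> 0 powr (2/q) + c * \<sigma>\<^sup>2"
proof -
  define c0 where "c0 = \<Phi> 0 powr (1/q)"
  have c0: "c0 > 0" using \<Phi>0 by (simp add: c0_def)
  define a where "a = (\<lambda>n::nat. \<Phi> 0 powr (2/q) + c * \<sigma>\<^sup>2 * ((1 + 2 * (\<sigma> * inverse (real (Suc n))) / c0) powr (q - 2) * (1 + inverse (real (Suc n)))))"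
  have "a \<longlonglongrightarrow> \<Phi> 0 powr (2/q) + c * \<sigma>\<^sup>2 * ((1 + 2 * (\<sigma> * 0) / c0) powr (q - 2) * (1 + 0))"
    unfolding a_def by (intro tendsto_intros LIMSEQ_inverse_real_of_nat) (use c0 in auto)
  then have lim: "a \<longlonglongrightarrow> \<Phi> 0 powr (2/q) + c * \<sigma>\<^sup>2" by simp
  have "\<Phi> 1 powr (2/q) \<le> a n" for n
  proof -
    have "(real (Suc n) + 1) / real (Suc n) = 1 + inverse (real (Suc n))" by (simp add: field_simps)
    then show ?thesis using grid_bound[of "Suc n"] by (simp add: a_def c0_def divide_inverse)
  qed
  then show ?thesis by (intro LIMSEQ_le_const[OF lim]) auto
qed

end

context
  fixes P :: "'x measure" and U :: "'x \<Rightarrow> real^'d" and s :: nat and q :: real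
  assumes P: "prob_space P" and s: "s \<ge> 2" "even s" and q: "q \<ge> 2"
    and U[measurable]: "U \<in> borel_measurable P"
    and Ui: "integrable P (\<lambda>x. lsnorm s (U x) powr q)"
begin

interpretation prob_space P by (rule P)

lemma integrable_lsnorm_line_powr: "integrable P (\<lambda>x. lsnorm s (b + t *\<^sub>R U x) powr q)"
proof -
  have g: "integrable P (\<lambda>x. (\<bar>t\<bar> * lsnorm s (U x)) powr q)"
    using Ui by (simp add: powr_mult lsnorm_nonneg)
  have "integrable P (\<lambda>x. (lsnorm s b + \<bar>t\<bar> * lsnorm s (U x)) powr q)"
    by (rule integrable_powr_add[OF _ _ _ _ _ _ g]) (use q in \<open>auto simp: lsnorm_nonneg\<close>)
  then show ?thesis
  proof (rule Bochner_Integration.integrable_bound)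
    show "AE x in P. norm (lsnorm s (b + t *\<^sub>R U x) powr q) \<le> norm ((lsnorm s b + \<bar>t\<bar> * lsnorm s (U x)) powr q)"
    proof (intro AE_I2)
      fix x
      have "lsnorm s (b + t *\<^sub>R U x) \<le> lsnorm s b + lsnorm s (t *\<^sub>R U x)" by (rule lsnorm_triangle[OF s(1)])
      also have "lsnorm s (t *\<^sub>R U x) = \<bar>t\<bar> * lsnorm s (U x)" using s by (intro lsnorm_scale) simp
      finally have "lsnorm s (b + t *\<^sub>R U x) powr q \<le> (lsnorm s b + \<bar>t\<bar> * lsnorm s (U x)) powr q"
        using q by (intro powr_mono2) (auto simp: lsnorm_nonneg)
      then show "norm (lsnorm s (b + t *\<^sub>R U x) powr q) \<le> norm ((lsnorm s b + \<bar>t\<bar> * lsnorm s (U x)) powr q)"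
        by simp
    qed
  qed measurable
qed

lemma integrable_lsnorm_powr_deriv_line: "integrable P (\<lambda>x. lsnorm_powr_deriv s q (b + t *\<^sub>R U x) (U x))"
proof (rule Bochner_Integration.integrable_bound)
  show "integrable P (\<lambda>x. q * (lsnorm s (b + t *\<^sub>R U x) powr q + lsnorm s (U x) powr q))"
    using integrable_lsnorm_line_powr[of b t] Ui by auto
  show "AE x in P. norm (lsnorm_powr_deriv s q (b + t *\<^sub>R U x) (U x)) \<le> norm (q * (lsnorm s (b + t *\<^sub>R U x) powr q + lsnorm s (U x) powr q))"
  proof (intro AE_I2)
    fix x
    have "\<bar>lsnorm_powr_deriv s q (b + t *\<^sub>R U x) (U x)\<bar> \<le> \<bar>q\<bar> * lsnorm s (b + t *\<^sub>R U x) powr (q - 1) * lsnorm s (U x)"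
      by (rule lsnorm_powr_deriv_bound[OF s])
    also have "\<dots> \<le> q * (lsnorm s (b + t *\<^sub>R U x) powr q + lsnorm s (U x) powr q)"
      using Youngs_inequality_powr[of q "lsnorm s (b + t *\<^sub>R U x)" "lsnorm s (U x)"] q
      by (simp add: lsnorm_nonneg mult.assoc)
    finally show "norm (lsnorm_powr_deriv s q (b + t *\<^sub>R U x) (U x)) \<le> norm (q * (lsnorm s (b + t *\<^sub>R U x) powr q + lsnorm s (U x) powr q))"
      using q by (simp add: lsnorm_nonneg)
  qed
qed measurable

lemma integrable_vec_nth_of_lsnorm_powr: "integrable P (\<lambda>x. U x $ i)"
proof (rule Bochner_Integration.integrable_bound)
  show "integrable P (\<lambda>x. 1 + lsnorm s (U x) powr q)" using Ui by auto
  show "AE x in P. norm (U x $ i) \<le> norm (1 + lsnorm s (U x) powr q)"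
  proof (intro AE_I2)
    fix x
    have "\<bar>U x $ i\<bar> \<le> lsnorm s (U x)" by (rule abs_vec_nth_le_lsnorm) (use s in simp)
    also have "lsnorm s (U x) \<le> 1 + lsnorm s (U x) powr q"
    proof (cases "lsnorm s (U x) \<le> 1")
      case True
      have "0 \<le> lsnorm s (U x) powr q" by simp
      with True show ?thesis by linarith
    next
      case False
      then have "lsnorm s (U x) powr 1 \<le> lsnorm s (U x) powr q" using q by (intro powr_mono) auto
      then show ?thesis using False by simp
    qed
    finally show "norm (U x $ i) \<le> norm (1 + lsnorm s (U x) powr q)" by simp
  qed
qed measurable

lemma lsnorm_line_powr_integral_tangent:
  "(\<integral>x. lsnorm s (b + t *\<^sub>R U x) powr q \<partial>P) + (t' - t) * (\<integral>x. lsnorm_powr_deriv s q (b + t *\<^sub>R U x) (U x) \<partial>P)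
     \<le> (\<integral>x. lsnorm s (b + t' *\<^sub>R U x) powr q \<partial>P)"
proof -
  note il = integrable_lsnorm_line_powr and ifd = integrable_lsnorm_powr_deriv_line
  have "(\<integral>x. lsnorm s (b + t *\<^sub>R U x) powr q \<partial>P) + (t' - t) * (\<integral>x. lsnorm_powr_deriv s q (b + t *\<^sub>R U x) (U x) \<partial>P)
      = (\<integral>x. lsnorm s (b + t *\<^sub>R U x) powr q + (t' - t) * lsnorm_powr_deriv s q (b + t *\<^sub>R U x) (U x) \<partial>P)"
    using il ifd by simp
  also have "\<dots> \<le> (\<integral>x. lsnorm s (b + t' *\<^sub>R U x) powr q \<partial>P)"
  proof (rule integral_mono)
    show "integrable P (\<lambda>x. lsnorm s (b + t *\<^sub>R U x) powr q + (t' - t) * lsnorm_powr_deriv s q (b + t *\<^sub>R U x) (U x))"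
      using il ifd by simp
    fix x
    have "lsnorm s (b + t *\<^sub>R U x) powr q + lsnorm_powr_deriv s q (b + t *\<^sub>R U x) ((b + t' *\<^sub>R U x) - (b + t *\<^sub>R U x))
        \<le> lsnorm s (b + t' *\<^sub>R U x) powr q"
      by (rule lsnorm_powr_convex_ineq[OF s]) (use q in simp)
    moreover have "(b + t' *\<^sub>R U x) - (b + t *\<^sub>R U x) = (t' - t) *\<^sub>R U x" by (simp add: algebra_simps)
    ultimately show "lsnorm s (b + t *\<^sub>R U x) powr q + (t' - t) * lsnorm_powr_deriv s q (b + t *\<^sub>R U x) (U x)
        \<le> lsnorm s (b + t' *\<^sub>R U x) powr q"
      by (simp add: lsnorm_powr_deriv_scale)
  qed (rule il)
  finally show ?thesis .
qed

lemma lq_norm_lsnorm_line_le: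
  assumes "t \<le> t'"
  shows "lq_norm P q (\<lambda>x. lsnorm s (b + t' *\<^sub>R U x))
     \<le> lq_norm P q (\<lambda>x. lsnorm s (b + t *\<^sub>R U x)) + (t' - t) * lq_norm P q (\<lambda>x. lsnorm s (U x))"
proof -
  have line: "(\<lambda>x. lsnorm s ((b + t *\<^sub>R U x) + (t' - t) *\<^sub>R U x)) = (\<lambda>x. lsnorm s (b + t' *\<^sub>R U x))"
    by (simp add: algebra_simps)
  have "integrable P (\<lambda>x. lsnorm s ((t' - t) *\<^sub>R U x) powr q)"
    using Ui s assms by (simp add: lsnorm_scale powr_mult lsnorm_nonneg)
  then have "lq_norm P q (\<lambda>x. lsnorm s ((b + t *\<^sub>R U x) + (t' - t) *\<^sub>R U x))
      \<le> lq_norm P q (\<lambda>x. lsnorm s (b + t *\<^sub>R U x)) + lq_norm P q (\<lambda>x. lsnorm s ((t' - t) *\<^sub>R U x))"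
    using q by (intro lq_norm_lsnorm_add_le[OF s(1)] integrable_lsnorm_line_powr) auto
  then show ?thesis using lq_norm_lsnorm_scaleR[of s q P "t' - t" U] s q assms by (simp add: line)
qed

lemma lsnorm_powr_deriv_line_integral_increment:
  assumes tt: "t \<le> t'" and pos: "(\<integral>x. lsnorm s (b + t' *\<^sub>R U x) powr q \<partial>P) > 0"
  defines "\<sigma> \<equiv> lq_norm P q (\<lambda>x. lsnorm s (U x))"
  shows "(\<integral>x. lsnorm_powr_deriv s q (b + t' *\<^sub>R U x) (U x) \<partial>P) - (\<integral>x. lsnorm_powr_deriv s q (b + t *\<^sub>R U x) (U x) \<partial>P)
     \<le> q * (max q (real s) - 1) * (t' - t) * \<sigma>\<^sup>2
       * (lq_norm P q (\<lambda>x. lsnorm s (b + t' *\<^sub>R U x)) + (t' - t) * \<sigma>) powr (q - 2)"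
proof -
  note ifd = integrable_lsnorm_powr_deriv_line
  have m1: "max q (real s) - 1 \<ge> 1" using q by (simp add: max_def)
  define Y where "Y = (\<lambda>x. lsnorm s (b + t' *\<^sub>R U x) + (t' - t) * lsnorm s (U x))"
  have Y0: "Y x \<ge> 0" for x using tt by (simp add: Y_def lsnorm_nonneg)
  have Ui': "integrable P (\<lambda>x. ((t' - t) * lsnorm s (U x)) powr q)"
    using Ui tt by (simp add: powr_mult lsnorm_nonneg)
  have Yi: "integrable P (\<lambda>x. Y x powr q)" unfolding Y_def
    by (rule integrable_powr_add) (use q tt integrable_lsnorm_line_powr Ui' in \<open>auto simp: lsnorm_nonneg\<close>)
  have Ypos: "(\<integral>x. Y x powr q \<partial>P) > 0"
  proof -
    have "(\<integral>x. lsnorm s (b + t' *\<^sub>R U x) powr q \<partial>P) \<le> (\<integral>x. Y x powr q \<partial>P)"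
      using tt q by (intro integral_mono[OF integrable_lsnorm_line_powr Yi] powr_mono2)
        (auto simp: Y_def lsnorm_nonneg)
    then show ?thesis using pos by simp
  qed
  have LY: "(\<integral>x. Y x powr q \<partial>P) powr (1/q) \<le> lq_norm P q (\<lambda>x. lsnorm s (b + t' *\<^sub>R U x)) + (t' - t) * \<sigma>"
  proof -
    have "(\<integral>x. Y x powr q \<partial>P) powr (1/q) \<le> (\<integral>x. lsnorm s (b + t' *\<^sub>R U x) powr q \<partial>P) powr (1/q)
        + (\<integral>x. ((t' - t) * lsnorm s (U x)) powr q \<partial>P) powr (1/q)"
      unfolding Y_def
      by (rule Minkowski_inequality_integral) (use q tt integrable_lsnorm_line_powr Ui' in \<open>auto simp: lsnorm_nonneg\<close>)
    also have "(\<integral>x. ((t' - t) * lsnorm s (U x)) powr q \<partial>P) powr (1/q) = (t' - t) * \<sigma>"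
      using lq_norm_lsnorm_scaleR[of s q P "t' - t" U] s q tt
      by (simp add: \<sigma>_def lq_norm_def lsnorm_scale lsnorm_nonneg)
    finally show ?thesis by (simp add: lq_norm_def lsnorm_nonneg)
  qed
  have Um: "(\<lambda>x. lsnorm s (U x)) \<in> borel_measurable P" and Ym: "Y \<in> borel_measurable P"
    unfolding Y_def by measurable
  note HM = Holder_inequality_moment[OF q Um Ym lsnorm_nonneg Y0 Ui Yi Ypos]
  have "(\<integral>x. lsnorm_powr_deriv s q (b + t' *\<^sub>R U x) (U x) \<partial>P) - (\<integral>x. lsnorm_powr_deriv s q (b + t *\<^sub>R U x) (U x) \<partial>P)
      = (\<integral>x. lsnorm_powr_deriv s q (b + t' *\<^sub>R U x) (U x) - lsnorm_powr_deriv s q (b + t *\<^sub>R U x) (U x) \<partial>P)"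
    using ifd by simp
  also have "\<dots> \<le> (\<integral>x. (q * (max q (real s) - 1) * (t' - t)) * (lsnorm s (U x) ^ 2 * Y x powr (q - 2)) \<partial>P)"
  proof (rule integral_mono)
    show "integrable P (\<lambda>x. lsnorm_powr_deriv s q (b + t' *\<^sub>R U x) (U x) - lsnorm_powr_deriv s q (b + t *\<^sub>R U x) (U x))"
      using ifd by simp
    show "integrable P (\<lambda>x. (q * (max q (real s) - 1) * (t' - t)) * (lsnorm s (U x) ^ 2 * Y x powr (q - 2)))"
      using HM(1) by simp
    show "lsnorm_powr_deriv s q (b + t' *\<^sub>R U x) (U x) - lsnorm_powr_deriv s q (b + t *\<^sub>R U x) (U x)
        \<le> (q * (max q (real s) - 1) * (t' - t)) * (lsnorm s (U x) ^ 2 * Y x powr (q - 2))" for x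
      using lsnorm_powr_deriv_line_increment_le[OF s q tt, of b "U x"] by (simp add: Y_def mult_ac)
  qed
  also have "\<dots> = (q * (max q (real s) - 1) * (t' - t)) * (\<integral>x. lsnorm s (U x) ^ 2 * Y x powr (q - 2) \<partial>P)"
    by simp
  also have "\<dots> \<le> (q * (max q (real s) - 1) * (t' - t)) * (\<sigma>\<^sup>2 * ((\<integral>x. Y x powr q \<partial>P) powr (1/q)) powr (q - 2))"
    using HM(2) q tt m1 
    by (intro mult_left_mono) (auto simp: \<sigma>_def lq_norm_lsnorm_sq powr_powr)
  also have "\<dots> \<le> (q * (max q (real s) - 1) * (t' - t)) * (\<sigma>\<^sup>2 * (lq_norm P q (\<lambda>x. lsnorm s (b + t' *\<^sub>R U x)) + (t' - t) * \<sigma>) powr (q - 2))"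
    using LY q tt m1 by (intro mult_left_mono powr_mono2) auto
  finally show ?thesis by (simp add: mult_ac)
qed

lemma Rio_inequality:
  assumes U0: "\<And>i. (\<integral>x. U x $ i \<partial>P) = 0"
  shows "(lq_norm P q (\<lambda>x. lsnorm s (b + U x)))\<^sup>2
     \<le> lsnorm s b ^ 2 + (max q (real s) - 1) * (lq_norm P q (\<lambda>x. lsnorm s (U x)))\<^sup>2"
proof -
  have s0: "s > 0" and q0: "q > 0" using s q by auto
  define \<sigma> where "\<sigma> = lq_norm P q (\<lambda>x. lsnorm s (U x))"
  have \<sigma>: "\<sigma> \<ge> 0" by (simp add: \<sigma>_def lq_norm_nonneg)
  have m1: "max q (real s) - 1 \<ge> 1" using q by (simp add: max_def)
  show ?thesis
  proof (cases "b = 0")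
    case True
    then show ?thesis using m1 s0 by (simp add: \<sigma>_def[symmetric] mult_le_cancel_right1)
  next
    case False
    define \<Phi> where "\<Phi> = (\<lambda>t. \<integral>x. lsnorm s (b + t *\<^sub>R U x) powr q \<partial>P)"
    define D where "D = (\<lambda>t. \<integral>x. lsnorm_powr_deriv s q (b + t *\<^sub>R U x) (U x) \<partial>P)"
    have root: "\<Phi> t powr (1/q) = lq_norm P q (\<lambda>x. lsnorm s (b + t *\<^sub>R U x))" for t
      by (simp add: \<Phi>_def lq_norm_def lsnorm_nonneg)
    have \<Phi>_at_0: "\<Phi> 0 = lsnorm s b powr q" by (simp add: \<Phi>_def prob_space)
    have D0: "D 0 = 0"
    proof -
      have "D 0 = (\<integral>x. q * lsnorm s b powr (q - real s) * (\<Sum>i\<in>UNIV. (b $ i) ^ (s - 1) * U x $ i) \<partial>P)"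
        by (simp add: D_def lsnorm_powr_deriv_def inner_odot_pow)
      also have "\<dots> = q * lsnorm s b powr (q - real s) * (\<Sum>i\<in>UNIV. \<integral>x. (b $ i) ^ (s - 1) * U x $ i \<partial>P)"
        using integrable_vec_nth_of_lsnorm_powr by (simp add: Bochner_Integration.integral_sum)
      also have "\<dots> = 0" by (simp add: U0)
      finally show ?thesis .
    qed
    have tangent_ineq: "\<Phi> t + (t' - t) * D t \<le> \<Phi> t'" for t t'
      unfolding \<Phi>_def D_def by (rule lsnorm_line_powr_integral_tangent)
    have "lsnorm s b powr q > 0" using False lsnorm_eq_0_iff[OF s0, of b] by simp
    then have \<Phi>pos: "\<Phi> t > 0" for t using tangent_ineq[of 0 t] by (simp add: D0 \<Phi>_at_0 del: powr_gt_zero)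
    interpret moment_path \<Phi> D q "max q (real s) - 1" \<sigma>
    proof
      show "D t' - D t \<le> q * (max q (real s) - 1) * (t' - t) * \<sigma>\<^sup>2 * (\<Phi> t' powr (1/q) + (t' - t) * \<sigma>) powr (q - 2)"
        if "0 \<le> t" "t \<le> t'" "t' \<le> 1" for t t'
        using lsnorm_powr_deriv_line_integral_increment[OF that(2) \<Phi>pos[of t', unfolded \<Phi>_def]]
        by (simp add: D_def root \<sigma>_def)
      show "\<Phi> t' powr (1/q) \<le> \<Phi> t powr (1/q) + (t' - t) * \<sigma>" if "0 \<le> t" "t \<le> t'" "t' \<le> 1" for t t'
        using lq_norm_lsnorm_line_le[OF that(2)] by (simp add: root \<sigma>_def)
    qed (use q m1 \<sigma> \<Phi>pos D0 tangent_ineq in auto)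
    have "\<Phi> 0 powr (2/q) = lsnorm s b ^ 2"
      using q0 by (simp add: \<Phi>_at_0 powr_powr lsnorm_nonneg)
    moreover have "(lq_norm P q (\<lambda>x. lsnorm s (b + U x)))\<^sup>2 = \<Phi> 1 powr (2/q)"
      by (simp add: \<Phi>_def lq_norm_lsnorm_sq)
    ultimately show ?thesis using bound by (simp add: \<sigma>_def)
  qed
qed

end

section \<open>One step of SGD\<close>

lemma lq_norm_centered_le:
  fixes V :: "'a \<Rightarrow> real^'d"
  assumes P: "prob_space P" and s: "s \<ge> 2" "even s" and q: "q \<ge> 2"
    and V[measurable]: "V \<in> borel_measurable P" and Vi: "integrable P (\<lambda>x. lsnorm s (V x) powr q)"
  shows "integrable P (\<lambda>x. lsnorm s (V x - (\<integral>y. V y \<partial>P)) powr q)"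
    and "lq_norm P q (\<lambda>x. lsnorm s (V x - (\<integral>y. V y \<partial>P)))
       \<le> lq_norm P q (\<lambda>x. lsnorm s (V x)) + lsnorm s (\<integral>y. V y \<partial>P)"
proof -
  interpret prob_space P by (rule P)
  define c where "c = - (\<integral>y. V y \<partial>P)"
  have ci: "integrable P (\<lambda>_. lsnorm s c powr q)" by simp
  note c_meas = borel_measurable_const[of c P]
  show "integrable P (\<lambda>x. lsnorm s (V x - (\<integral>y. V y \<partial>P)) powr q)"
    using integrable_lsnorm_powr_add[OF s(1) _ V c_meas Vi ci] q by (simp add: c_def)
  have "lq_norm P q (\<lambda>x. lsnorm s (V x + c)) \<le> lq_norm P q (\<lambda>x. lsnorm s (V x)) + lq_norm P q (\<lambda>_. lsnorm s c)"
    using lq_norm_lsnorm_add_le[OF s(1) _ V c_meas Vi ci] q by simp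
  then show "lq_norm P q (\<lambda>x. lsnorm s (V x - (\<integral>y. V y \<partial>P)))
       \<le> lq_norm P q (\<lambda>x. lsnorm s (V x)) + lsnorm s (\<integral>y. V y \<partial>P)"
    using q s by (simp add: c_def lq_norm_const lsnorm_minus lsnorm_nonneg)
qed

lemma lsnorm_sq_gradient_step_le:
  fixes x g :: "real^'d"
  assumes s: "s \<ge> 2" "even s" and \<alpha>: "\<alpha> \<ge> 0"
    and convex: "odot_pow x (s - 1) \<bullet> g \<ge> \<mu> * lsnorm s x ^ s"
    and lipschitz: "lsnorm s g \<le> L * lsnorm s x"
  shows "lsnorm s (x - \<alpha> *\<^sub>R g) ^ 2 \<le> (1 - 2 * \<alpha> * \<mu> + (real s - 1) * \<alpha>\<^sup>2 * L\<^sup>2) * lsnorm s x ^ 2"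
proof -
  have s0: "s > 0" using s by simp
  define N where "N = lsnorm s x"
  have N: "N \<ge> 0" by (simp add: N_def lsnorm_nonneg)
  have "lsnorm s (x - \<alpha> *\<^sub>R g) ^ 2 = lsnorm s (x + (- \<alpha>) *\<^sub>R g) ^ 2" by simp
  also have "\<dots> \<le> N\<^sup>2 + lsnorm_powr_deriv s 2 x ((- \<alpha>) *\<^sub>R g) + (real s - 1) * lsnorm s ((- \<alpha>) *\<^sub>R g) ^ 2"
    unfolding N_def by (rule lsnorm_sq_smooth[OF s])
  also have "\<dots> = N\<^sup>2 - \<alpha> * lsnorm_powr_deriv s 2 x g + (real s - 1) * (\<alpha> * lsnorm s g)\<^sup>2"
    using \<alpha> by (simp only: lsnorm_powr_deriv_scale lsnorm_scale[OF s0]) (simp add: power_mult_distrib)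
  also have "\<dots> \<le> N\<^sup>2 - \<alpha> * (2 * \<mu> * N\<^sup>2) + (real s - 1) * (\<alpha>\<^sup>2 * L\<^sup>2 * N\<^sup>2)"
  proof -
    have "lsnorm_powr_deriv s 2 x g \<ge> 2 * \<mu> * N\<^sup>2"
    proof (cases "x = 0")
      case True then show ?thesis using s0 by (simp add: N_def lsnorm_powr_deriv_def)
    next
      case False
      then have Npos: "N > 0" using lsnorm_eq_0_iff[OF s0, of x] N by (simp add: N_def)
      have "N powr (2 - real s) * N ^ s = N\<^sup>2"
        using powr_mult_power[OF Npos, of s "2 - real s"] s0 N by simp
      then have "2 * \<mu> * N\<^sup>2 = 2 * N powr (2 - real s) * (\<mu> * N ^ s)" by (simp add: algebra_simps)
      also have "\<dots> \<le> 2 * N powr (2 - real s) * (odot_pow x (s - 1) \<bullet> g)"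
        using convex by (intro mult_left_mono) (auto simp: N_def)
      also have "\<dots> = lsnorm_powr_deriv s 2 x g" by (simp add: lsnorm_powr_deriv_def N_def)
      finally show ?thesis .
    qed
    moreover have "(\<alpha> * lsnorm s g)\<^sup>2 \<le> (\<alpha> * (L * N))\<^sup>2"
      using lipschitz \<alpha> by (intro power_mono mult_left_mono) (auto simp: N_def lsnorm_nonneg)
    ultimately show ?thesis
      using \<alpha> s by (intro add_mono diff_mono mult_left_mono) (auto simp: power_mult_distrib)
  qed
  finally show ?thesis by (simp add: N_def algebra_simps)
qed

lemma sgd_step_constants_le:
  fixes B u N Mq m \<alpha> \<mu> L :: real
  assumes drift: "B \<le> (1 - 2 * \<alpha> * \<mu> + (real s - 1) * \<alpha>\<^sup>2 * L\<^sup>2) * N\<^sup>2"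
    and u: "0 \<le> u" "u \<le> \<alpha> * (2 * L * N + Mq)" and m: "m \<ge> real s" "m \<ge> 2"
  shows "B + (m - 1) * u\<^sup>2 \<le> (1 - 2 * \<alpha> * \<mu> + 7 * m * \<alpha>\<^sup>2 * L\<^sup>2) * N\<^sup>2 + 3 * m * \<alpha>\<^sup>2 * Mq\<^sup>2"
proof -
  define A where "A = \<alpha>\<^sup>2 * L\<^sup>2 * N\<^sup>2"
  define C where "C = \<alpha>\<^sup>2 * Mq\<^sup>2"
  have A: "A \<ge> 0" and C: "C \<ge> 0" by (simp_all add: A_def C_def)
  have "u\<^sup>2 \<le> \<alpha>\<^sup>2 * (2 * L * N + Mq)\<^sup>2"
    using power_mono[OF u(2) u(1), of 2] by (simp add: power_mult_distrib)
  also have "\<dots> \<le> 6 * A + 3 * C"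
    using sum_squares_ge_zero[of "\<alpha> * (L * N - Mq)" 0]
    by (auto simp: A_def C_def power2_eq_square algebra_simps)
  finally have "(m - 1) * u\<^sup>2 \<le> (m - 1) * (6 * A + 3 * C)"
    using m by (intro mult_left_mono) auto
  moreover have "B \<le> N\<^sup>2 - 2 * \<alpha> * \<mu> * N\<^sup>2 + (real s - 1) * A"
    using drift by (simp add: A_def algebra_simps)
  moreover have "(real s - 1) * A \<le> (m - 1) * A" using m A by (intro mult_right_mono) auto
  moreover have "(1 - 2 * \<alpha> * \<mu> + 7 * m * \<alpha>\<^sup>2 * L\<^sup>2) * N\<^sup>2 + 3 * m * \<alpha>\<^sup>2 * Mq\<^sup>2
      = N\<^sup>2 - 2 * \<alpha> * \<mu> * N\<^sup>2 + (m - 1) * A + (m - 1) * (6 * A + 3 * C) + (7 * A + 3 * C)"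
    by (simp add: A_def C_def algebra_simps)
  ultimately show ?thesis using A C by linarith
qed

lemma borel_measurable_section:
  assumes "(\<lambda>(b, x). f b x) \<in> borel_measurable (borel \<Otimes>\<^sub>M P)"
  shows "f b \<in> borel_measurable P"
proof -
  have "(\<lambda>x. (b, x)) \<in> P \<rightarrow>\<^sub>M borel \<Otimes>\<^sub>M P" by measurable
  from measurable_compose[OF this assms] show ?thesis by simp
qed

lemma gradient_moment_bounds:
  fixes P :: "'x measure" and dg :: "real^'d \<Rightarrow> 'x \<Rightarrow> real^'d" and dG :: "real^'d \<Rightarrow> real^'d"
  assumes P: "prob_space P"
    and dg_meas: "(\<lambda>(b, x). dg b x) \<in> borel_measurable (borel \<Otimes>\<^sub>M P)"
    and dG_def: "\<And>b. dG b = (\<integral>x. dg b x \<partial>P)"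
    and q: "q \<ge> 2" and s: "s \<ge> 2" "even s"
    and dGstar: "dG bstar = 0"
    and A3_M: "integrable P (\<lambda>x. \<bar>lsnorm s (dg bstar x)\<bar> powr q)"
    and A3_L_int: "\<And>b b'. integrable P (\<lambda>x. \<bar>lsnorm s (dg b x - dg b' x)\<bar> powr q)"
    and A3_L: "\<And>b b'. lq_norm P q (\<lambda>x. lsnorm s (dg b x - dg b' x)) \<le> L * lsnorm s (b - b')"
  shows "integrable P (\<lambda>x. lsnorm s (dg \<beta> x) powr q)"
    and "lq_norm P q (\<lambda>x. lsnorm s (dg \<beta> x))
         \<le> L * lsnorm s (\<beta> - bstar) + lq_norm P q (\<lambda>x. lsnorm s (dg bstar x))"
    and "lsnorm s (dG \<beta>) \<le> L * lsnorm s (\<beta> - bstar)"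
proof -
  interpret prob_space P by (rule P)
  have q1: "q \<ge> 1" using q by simp
  have meas[measurable]: "dg b \<in> borel_measurable P" for b by (rule borel_measurable_section[OF dg_meas])
  define Z where "Z = (\<lambda>x. dg \<beta> x - dg bstar x)"
  have Zm[measurable]: "Z \<in> borel_measurable P" by (simp add: Z_def)
  have Wi: "integrable P (\<lambda>x. lsnorm s (dg bstar x) powr q)"
    using A3_M by (simp add: lsnorm_nonneg)
  have Zi: "integrable P (\<lambda>x. lsnorm s (Z x) powr q)"
    using A3_L_int[of \<beta> bstar] by (simp add: Z_def lsnorm_nonneg)
  have dg_split: "dg \<beta> x = Z x + dg bstar x" for x by (simp add: Z_def)
  show Vi: "integrable P (\<lambda>x. lsnorm s (dg \<beta> x) powr q)"
    unfolding dg_split by (rule integrable_lsnorm_powr_add[OF s(1) _ Zm meas Zi Wi]) (use q in auto)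
  have LZ: "lq_norm P q (\<lambda>x. lsnorm s (Z x)) \<le> L * lsnorm s (\<beta> - bstar)"
    using A3_L[of \<beta> bstar] by (simp add: Z_def)
  show "lq_norm P q (\<lambda>x. lsnorm s (dg \<beta> x))
      \<le> L * lsnorm s (\<beta> - bstar) + lq_norm P q (\<lambda>x. lsnorm s (dg bstar x))"
    using lq_norm_lsnorm_add_le[OF s(1) q1 Zm meas Zi Wi] LZ unfolding dg_split by simp
  have "(\<integral>x. Z x \<partial>P) = dG \<beta>"
    using integrable_of_lsnorm_powr[OF P s(1) q1 meas Vi] integrable_of_lsnorm_powr[OF P s(1) q1 meas Wi]
    by (simp add: Z_def dG_def[symmetric] dGstar)
  then show "lsnorm s (dG \<beta>) \<le> L * lsnorm s (\<beta> - bstar)"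
    using lsnorm_integral_le[OF P s q Zm Zi] LZ by simp
qed

lemma sgd_step_bound:
  fixes P :: "'x measure" and dg :: "real^'d \<Rightarrow> 'x \<Rightarrow> real^'d" and dG :: "real^'d \<Rightarrow> real^'d"
  assumes P: "prob_space P"
    and dg_meas: "(\<lambda>(b, x). dg b x) \<in> borel_measurable (borel \<Otimes>\<^sub>M P)"
    and dG_def: "\<And>b. dG b = (\<integral>x. dg b x \<partial>P)"
    and q: "q \<ge> 2" and s: "s \<ge> 2" "even s"
    and A2: "\<And>b b'. odot_pow (b - b') (s - 1) \<bullet> (dG b - dG b') \<ge> \<mu> * lsnorm s (b - b') ^ s"
    and dGstar: "dG bstar = 0"
    and A3_M: "integrable P (\<lambda>x. \<bar>lsnorm s (dg bstar x)\<bar> powr q)"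
    and A3_L_int: "\<And>b b'. integrable P (\<lambda>x. \<bar>lsnorm s (dg b x - dg b' x)\<bar> powr q)"
    and A3_L: "\<And>b b'. lq_norm P q (\<lambda>x. lsnorm s (dg b x - dg b' x)) \<le> L * lsnorm s (b - b')"
    and \<alpha>: "\<alpha> \<ge> 0"
  shows "integrable P (\<lambda>x. lsnorm s (\<beta> - \<alpha> *\<^sub>R dg \<beta> x - bstar) powr q)"
    and "(lq_norm P q (\<lambda>x. lsnorm s (\<beta> - \<alpha> *\<^sub>R dg \<beta> x - bstar)))\<^sup>2
       \<le> (1 - 2 * \<alpha> * \<mu> + 7 * max q (real s) * \<alpha>\<^sup>2 * L\<^sup>2) * lsnorm s (\<beta> - bstar) ^ 2
         + 3 * max q (real s) * \<alpha>\<^sup>2 * (lq_norm P q (\<lambda>x. lsnorm s (dg bstar x)))\<^sup>2"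
proof -
  interpret prob_space P by (rule P)
  have s0: "s > 0" and q0: "q > 0" and q1: "q \<ge> 1" using s q by auto
  note bounds = gradient_moment_bounds[OF P dg_meas dG_def q s dGstar A3_M A3_L_int A3_L, of \<beta>]
  define V where "V = dg \<beta>"
  define U where "U = (\<lambda>\<xi>. (- \<alpha>) *\<^sub>R (V \<xi> - dG \<beta>))"
  define b where "b = \<beta> - bstar - \<alpha> *\<^sub>R dG \<beta>"
  have Vm[measurable]: "V \<in> borel_measurable P" and Um[measurable]: "U \<in> borel_measurable P"
    using borel_measurable_section[OF dg_meas] by (simp_all add: V_def U_def)
  have Vi: "integrable P (\<lambda>\<xi>. lsnorm s (V \<xi>) powr q)" using bounds(1) by (simp add: V_def)
  have EV: "(\<integral>\<xi>. V \<xi> \<partial>P) = dG \<beta>" by (simp add: V_def dG_def)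
  note centred = lq_norm_centered_le[OF P s q Vm Vi, unfolded EV]
  have Ui: "integrable P (\<lambda>\<xi>. lsnorm s (U \<xi>) powr q)"
    using centred(1) \<alpha> by (simp add: U_def lsnorm_minus[OF s0] lsnorm_scale[OF s0] powr_mult lsnorm_nonneg)
  have "(\<integral>\<xi>. U \<xi> \<partial>P) = 0"
    unfolding U_def using integrable_of_lsnorm_powr[OF P s(1) q1 Vm Vi] by (simp add: EV prob_space)
  then have U0: "(\<integral>\<xi>. U \<xi> $ i \<partial>P) = 0" for i
    using integrable_of_lsnorm_powr[OF P s(1) q1 Um Ui]
    by (simp add: integral_bounded_linear[OF bounded_linear_vec_nth])
  have "lq_norm P q (\<lambda>\<xi>. lsnorm s (U \<xi>)) = \<alpha> * lq_norm P q (\<lambda>\<xi>. lsnorm s (V \<xi> - dG \<beta>))"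
    using lq_norm_lsnorm_scaleR[OF s0 q0, of P "- \<alpha>"] \<alpha> by (simp add: U_def)
  also have "\<dots> \<le> \<alpha> * (2 * L * lsnorm s (\<beta> - bstar) + lq_norm P q (\<lambda>\<xi>. lsnorm s (dg bstar \<xi>)))"
    using centred(2) bounds(2,3) \<alpha> by (intro mult_left_mono) (auto simp: V_def)
  finally have LU: "lq_norm P q (\<lambda>\<xi>. lsnorm s (U \<xi>))
      \<le> \<alpha> * (2 * L * lsnorm s (\<beta> - bstar) + lq_norm P q (\<lambda>\<xi>. lsnorm s (dg bstar \<xi>)))" .
  have bU: "\<beta> - \<alpha> *\<^sub>R dg \<beta> \<xi> - bstar = b + U \<xi>" for \<xi>
    by (simp add: b_def U_def V_def algebra_simps)
  show "integrable P (\<lambda>\<xi>. lsnorm s (\<beta> - \<alpha> *\<^sub>R dg \<beta> \<xi> - bstar) powr q)"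
    unfolding bU using integrable_lsnorm_line_powr[OF P s q Um Ui, of b 1] by simp
  have drift: "lsnorm s b ^ 2 \<le> (1 - 2 * \<alpha> * \<mu> + (real s - 1) * \<alpha>\<^sup>2 * L\<^sup>2) * lsnorm s (\<beta> - bstar) ^ 2"
    unfolding b_def using A2[of \<beta> bstar] bounds(3)
    by (intro lsnorm_sq_gradient_step_le[OF s \<alpha>]) (simp_all add: dGstar)
  have "(lq_norm P q (\<lambda>\<xi>. lsnorm s (b + U \<xi>)))\<^sup>2
      \<le> lsnorm s b ^ 2 + (max q (real s) - 1) * (lq_norm P q (\<lambda>\<xi>. lsnorm s (U \<xi>)))\<^sup>2"
    by (rule Rio_inequality[OF P s q Um Ui U0])
  also have "\<dots> \<le> (1 - 2 * \<alpha> * \<mu> + 7 * max q (real s) * \<alpha>\<^sup>2 * L\<^sup>2) * lsnorm s (\<beta> - bstar) ^ 2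
      + 3 * max q (real s) * \<alpha>\<^sup>2 * (lq_norm P q (\<lambda>\<xi>. lsnorm s (dg bstar \<xi>)))\<^sup>2"
    by (rule sgd_step_constants_le[OF drift lq_norm_nonneg LU]) (use q in auto)
  finally show "(lq_norm P q (\<lambda>\<xi>. lsnorm s (\<beta> - \<alpha> *\<^sub>R dg \<beta> \<xi> - bstar)))\<^sup>2
       \<le> (1 - 2 * \<alpha> * \<mu> + 7 * max q (real s) * \<alpha>\<^sup>2 * L\<^sup>2) * lsnorm s (\<beta> - bstar) ^ 2
         + 3 * max q (real s) * \<alpha>\<^sup>2 * (lq_norm P q (\<lambda>\<xi>. lsnorm s (dg bstar \<xi>)))\<^sup>2"
    by (simp add: bU)
qed

section \<open>The SGD chain\<close>

definition sgd_path :: "(real^'d \<Rightarrow> 'x \<Rightarrow> real^'d) \<Rightarrow> real \<Rightarrow> nat \<Rightarrow> real^'d \<Rightarrow> (nat \<Rightarrow> 'x) \<Rightarrow> real^'d" where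
  "sgd_path dg \<alpha> k b t = sgd dg \<alpha> (\<lambda>i t. t i) (\<lambda>_. b) k t"

lemma sgd_path_0[simp]: "sgd_path dg \<alpha> 0 b t = b" by (simp add: sgd_path_def)
lemma sgd_path_Suc: "sgd_path dg \<alpha> (Suc k) b t = sgd_path dg \<alpha> k b t - \<alpha> *\<^sub>R dg (sgd_path dg \<alpha> k b t) (t (Suc k))"
  by (simp add: sgd_path_def)

lemma sgd_eq_sgd_path: "sgd dg \<alpha> \<xi> B0 k \<omega> = sgd_path dg \<alpha> k (B0 \<omega>) (\<lambda>i. \<xi> i \<omega>)"
  by (induction k) (simp_all add: sgd_path_Suc)

lemma sgd_path_cong: "(\<And>i. 1 \<le> i \<Longrightarrow> i \<le> k \<Longrightarrow> t i = t' i) \<Longrightarrow> sgd_path dg \<alpha> k b t = sgd_path dg \<alpha> k b t'"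
proof (induction k)
  case 0 then show ?case by simp
next
  case (Suc k)
  then have "sgd_path dg \<alpha> k b t = sgd_path dg \<alpha> k b t'" by auto
  moreover have "t (Suc k) = t' (Suc k)" using Suc.prems by auto
  ultimately show ?case by (simp add: sgd_path_Suc)
qed

lemma borel_measurable_sgd_path:
  fixes P :: "'x measure" and dg :: "real^'d \<Rightarrow> 'x \<Rightarrow> real^'d"
  assumes dg_meas: "(\<lambda>(b, x). dg b x) \<in> borel_measurable (borel \<Otimes>\<^sub>M P)"
    and I: "{1..k} \<subseteq> I"
  shows "(\<lambda>(b, t). sgd_path dg \<alpha> k b t) \<in> borel_measurable (borel \<Otimes>\<^sub>M PiM I (\<lambda>_. P))"
  using I
proof (induction k)
  case 0 then show ?case by simp
next
  case (Suc k)
  have "{1..k} \<subseteq> I" using Suc.prems by auto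
  then have IH: "(\<lambda>(b, t). sgd_path dg \<alpha> k b t) \<in> borel_measurable (borel \<Otimes>\<^sub>M PiM I (\<lambda>_. P))" by (rule Suc.IH)
  have kI: "Suc k \<in> I" using Suc.prems by auto
  have c: "(\<lambda>(b, t). t (Suc k)) \<in> (borel \<Otimes>\<^sub>M PiM I (\<lambda>_. P)) \<rightarrow>\<^sub>M P"
  proof -
    have "(\<lambda>t. t (Suc k)) \<in> PiM I (\<lambda>_. P) \<rightarrow>\<^sub>M P" using kI by (rule measurable_component_singleton)
    from measurable_compose[OF measurable_snd this] show ?thesis by (simp add: case_prod_beta')
  qed
  have pr: "(\<lambda>z. (case z of (b, t) \<Rightarrow> sgd_path dg \<alpha> k b t, case z of (b, t) \<Rightarrow> t (Suc k))) \<in> (borel \<Otimes>\<^sub>M PiM I (\<lambda>_. P)) \<rightarrow>\<^sub>M borel \<Otimes>\<^sub>M P"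
    by (rule measurable_Pair[OF IH c])
  have dgc: "(\<lambda>z. dg (case z of (b, t) \<Rightarrow> sgd_path dg \<alpha> k b t) (case z of (b, t) \<Rightarrow> t (Suc k))) \<in> borel_measurable (borel \<Otimes>\<^sub>M PiM I (\<lambda>_. P))"
    using measurable_compose[OF pr dg_meas] by simp
  have "(\<lambda>z. (case z of (b, t) \<Rightarrow> sgd_path dg \<alpha> k b t) - \<alpha> *\<^sub>R dg (case z of (b, t) \<Rightarrow> sgd_path dg \<alpha> k b t) (case z of (b, t) \<Rightarrow> t (Suc k)))
      \<in> borel_measurable (borel \<Otimes>\<^sub>M PiM I (\<lambda>_. P))"
    using IH dgc by measurable
  then show ?case by (simp add: sgd_path_Suc case_prod_beta')
qed

lemma distr_pair_indep_set:
  fixes X :: "'a \<Rightarrow> 'b" and Y :: "'a \<Rightarrow> 'c"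
  assumes Mp: "prob_space M" and X: "X \<in> M \<rightarrow>\<^sub>M SS" and Y: "Y \<in> M \<rightarrow>\<^sub>M TT"
    and ind: "prob_space.indep_set M {X -` A \<inter> space M | A. A \<in> sets SS} {Y -` A \<inter> space M | A. A \<in> sets TT}"
  shows "distr M SS X \<Otimes>\<^sub>M distr M TT Y = distr M (SS \<Otimes>\<^sub>M TT) (\<lambda>x. (X x, Y x))"
proof -
  interpret prob_space M by (rule Mp)
  have XY: "(\<lambda>x. (X x, Y x)) \<in> M \<rightarrow>\<^sub>M SS \<Otimes>\<^sub>M TT" by (rule measurable_Pair[OF X Y])
  interpret X: prob_space "distr M SS X" by (rule prob_space_distr) (rule X)
  interpret Y: prob_space "distr M TT Y" by (rule prob_space_distr) (rule Y)
  interpret XY: pair_prob_space "distr M SS X" "distr M TT Y" ..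
  show ?thesis
  proof (rule pair_measure_eqI)
    show "sigma_finite_measure (distr M SS X)" ..
    show "sigma_finite_measure (distr M TT Y)" ..
    fix A B assume A: "A \<in> sets (distr M SS X)" and B: "B \<in> sets (distr M TT Y)"
    have "emeasure (distr M (SS \<Otimes>\<^sub>M TT) (\<lambda>x. (X x, Y x))) (A \<times> B) = emeasure M ((\<lambda>x. (X x, Y x)) -` (A \<times> B) \<inter> space M)"
      using A B by (intro emeasure_distr[OF XY]) auto
    also have "(\<lambda>x. (X x, Y x)) -` (A \<times> B) \<inter> space M = (X -` A \<inter> space M) \<inter> (Y -` B \<inter> space M)" by auto
    also have "emeasure M ((X -` A \<inter> space M) \<inter> (Y -` B \<inter> space M)) = emeasure M (X -` A \<inter> space M) * emeasure M (Y -` B \<inter> space M)"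
    proof -
      have "prob ((X -` A \<inter> space M) \<inter> (Y -` B \<inter> space M)) = prob (X -` A \<inter> space M) * prob (Y -` B \<inter> space M)"
        by (rule indep_setD[OF ind]) (use A B in auto)
      then show ?thesis by (simp add: emeasure_eq_measure measure_nonneg ennreal_mult)
    qed
    also have "\<dots> = emeasure (distr M SS X) A * emeasure (distr M TT Y) B"
      using A B X Y by (simp add: emeasure_distr)
    finally show "emeasure (distr M SS X) A * emeasure (distr M TT Y) B = emeasure (distr M (SS \<Otimes>\<^sub>M TT) (\<lambda>x. (X x, Y x))) (A \<times> B)" by simp
  qed simp
qed

lemma nn_integral_indep_set:
  fixes X :: "'a \<Rightarrow> 'b" and Y :: "'a \<Rightarrow> 'c" and g :: "'b \<times> 'c \<Rightarrow> ennreal"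
  assumes Mp: "prob_space M" and X[measurable]: "X \<in> M \<rightarrow>\<^sub>M SS" and Y[measurable]: "Y \<in> M \<rightarrow>\<^sub>M TT"
    and ind: "prob_space.indep_set M {X -` A \<inter> space M | A. A \<in> sets SS} {Y -` A \<inter> space M | A. A \<in> sets TT}"
    and g[measurable]: "g \<in> borel_measurable (SS \<Otimes>\<^sub>M TT)"
  shows "(\<integral>\<^sup>+ \<omega>. g (X \<omega>, Y \<omega>) \<partial>M) = (\<integral>\<^sup>+ \<omega>. (\<integral>\<^sup>+ y. g (X \<omega>, y) \<partial>distr M TT Y) \<partial>M)"
proof -
  interpret prob_space M by (rule Mp)
  interpret Yd: prob_space "distr M TT Y" by (rule prob_space_distr) (rule Y)
  have gd: "g \<in> borel_measurable (distr M SS X \<Otimes>\<^sub>M distr M TT Y)"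
    using g by (simp cong: measurable_cong_sets)
  have "(\<integral>\<^sup>+ \<omega>. g (X \<omega>, Y \<omega>) \<partial>M) = (\<integral>\<^sup>+ z. g z \<partial>distr M (SS \<Otimes>\<^sub>M TT) (\<lambda>\<omega>. (X \<omega>, Y \<omega>)))"
    by (rule nn_integral_distr[symmetric]) measurable
  also have "\<dots> = (\<integral>\<^sup>+ z. g z \<partial>(distr M SS X \<Otimes>\<^sub>M distr M TT Y))"
    using distr_pair_indep_set[OF Mp X Y ind] by simp
  also have "\<dots> = (\<integral>\<^sup>+ x. (\<integral>\<^sup>+ y. g (x, y) \<partial>distr M TT Y) \<partial>distr M SS X)"
    by (rule Yd.nn_integral_fst[symmetric]) (rule gd)
  also have "\<dots> = (\<integral>\<^sup>+ \<omega>. (\<integral>\<^sup>+ y. g (X \<omega>, y) \<partial>distr M TT Y) \<partial>M)"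
  proof -
    have mf: "(\<lambda>x. \<integral>\<^sup>+ y. g (x, y) \<partial>distr M TT Y) \<in> borel_measurable SS"
      using Yd.borel_measurable_nn_integral_fst[of g SS] g by (simp cong: measurable_cong_sets)
    have mf': "(\<lambda>x. \<integral>\<^sup>+ y. g (x, y) \<partial>distr M TT Y) \<in> borel_measurable (distr M SS X)"
      using mf by (simp cong: measurable_cong_sets)
    show ?thesis by (rule nn_integral_distr[OF X mf'])
  qed
  finally show ?thesis .
qed

lemma (in prob_space) indep_set_mono:
  assumes "indep_set A B" "A' \<subseteq> A" "B' \<subseteq> B"
  shows "indep_set A' B'"
proof -
  have "indep_sets (case_bool A B) UNIV" using assms(1) unfolding indep_set_def .
  then have "indep_sets (case_bool A' B') UNIV"
  proof (rule indep_sets_mono_sets)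
    fix i :: bool show "case_bool A' B' i \<subseteq> case_bool A B i" using assms by (cases i) simp_all
  qed
  then show ?thesis unfolding indep_set_def .
qed

lemma (in prob_space) indep_set_vimage_compose:
  assumes ind: "indep_var SS R1 TT R2"
    and Y1: "Y1 \<in> SS \<rightarrow>\<^sub>M N1" and Y2: "Y2 \<in> TT \<rightarrow>\<^sub>M N2"
  shows "indep_set {(Y1 \<circ> R1) -` A \<inter> space M | A. A \<in> sets N1} {(Y2 \<circ> R2) -` A \<inter> space M | A. A \<in> sets N2}"
proof -
  have rv: "R1 \<in> M \<rightarrow>\<^sub>M SS" "R2 \<in> M \<rightarrow>\<^sub>M TT"
    using indep_var_rv1[OF ind] indep_var_rv2[OF ind] by auto
  have isd: "indep_set (sigma_sets (space M) {R1 -` A \<inter> space M | A. A \<in> sets SS}) (sigma_sets (space M) {R2 -` A \<inter> space M | A. A \<in> sets TT})"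
    using indep_var_eq[THEN iffD1, OF ind] by (rule conjunct2)
  show ?thesis
  proof (rule indep_set_mono[OF isd])
    show "{(Y1 \<circ> R1) -` A \<inter> space M | A. A \<in> sets N1} \<subseteq> sigma_sets (space M) {R1 -` A \<inter> space M | A. A \<in> sets SS}"
    proof
      fix E assume "E \<in> {(Y1 \<circ> R1) -` A \<inter> space M | A. A \<in> sets N1}"
      then obtain A where A: "A \<in> sets N1" "E = (Y1 \<circ> R1) -` A \<inter> space M" by auto
      have sp: "\<And>\<omega>. \<omega> \<in> space M \<Longrightarrow> R1 \<omega> \<in> space SS" using rv(1) by (rule measurable_space)
      have Eeq: "E = R1 -` (Y1 -` A \<inter> space SS) \<inter> space M" unfolding A(2) using sp by auto
      have mem: "Y1 -` A \<inter> space SS \<in> sets SS" using Y1 A(1) by (rule measurable_sets)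
      show "E \<in> sigma_sets (space M) {R1 -` A \<inter> space M | A. A \<in> sets SS}"
        unfolding Eeq by (rule sigma_sets.Basic) (use mem in blast)
    qed
    show "{(Y2 \<circ> R2) -` A \<inter> space M | A. A \<in> sets N2} \<subseteq> sigma_sets (space M) {R2 -` A \<inter> space M | A. A \<in> sets TT}"
    proof
      fix E assume "E \<in> {(Y2 \<circ> R2) -` A \<inter> space M | A. A \<in> sets N2}"
      then obtain A where A: "A \<in> sets N2" "E = (Y2 \<circ> R2) -` A \<inter> space M" by auto
      have sp: "\<And>\<omega>. \<omega> \<in> space M \<Longrightarrow> R2 \<omega> \<in> space TT" using rv(2) by (rule measurable_space)
      have Eeq: "E = R2 -` (Y2 -` A \<inter> space TT) \<inter> space M" unfolding A(2) using sp by auto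
      have mem: "Y2 -` A \<inter> space TT \<in> sets TT" using Y2 A(1) by (rule measurable_sets)
      show "E \<in> sigma_sets (space M) {R2 -` A \<inter> space M | A. A \<in> sets TT}"
        unfolding Eeq by (rule sigma_sets.Basic) (use mem in blast)
    qed
  qed
qed

lemma Lq_bound_of_nn_integral_le:
  fixes M :: "'a measure" and Y Z :: "'a \<Rightarrow> real"
  assumes Mp: "prob_space M" and c: "c \<ge> 0" and K: "K \<ge> 0" and q: "q \<ge> 2"
    and Ym[measurable]: "Y \<in> borel_measurable M" and Zm[measurable]: "Z \<in> borel_measurable M"
    and Y0: "\<And>x. Y x \<ge> 0" and Z0: "\<And>x. Z x \<ge> 0"
    and Yi: "integrable M (\<lambda>x. Y x powr q)"
    and le: "(\<integral>\<^sup>+ x. ennreal (Z x powr q) \<partial>M) \<le> (\<integral>\<^sup>+ x. ennreal ((c * (Y x)\<^sup>2 + K) powr (q / 2)) \<partial>M)"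
  shows "integrable M (\<lambda>x. Z x powr q)"
    and "(\<integral>x. Z x powr q \<partial>M) powr (2/q) \<le> c * (\<integral>x. Y x powr q \<partial>M) powr (2/q) + K"
proof -
  interpret prob_space M by (rule Mp)
  define p where "p = q / 2"
  have p: "p \<ge> 1" using q by (simp add: p_def)
  have Y2: "(c * (Y x)\<^sup>2) powr p = c powr p * Y x powr q" for x
  proof -
    have "(Y x)\<^sup>2 = Y x powr 2" using Y0[of x] by (rule powr_of_nat_nonneg[of 2, simplified, symmetric])
    then have "(c * (Y x)\<^sup>2) powr p = c powr p * (Y x powr 2) powr p" using c Y0[of x] by (simp add: powr_mult)
    also have "(Y x powr 2) powr p = Y x powr q" by (simp add: powr_powr p_def)
    finally show ?thesis .
  qed
  have f1i: "integrable M (\<lambda>x. (c * (Y x)\<^sup>2) powr p)" using Yi by (simp add: Y2)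
  have f2i: "integrable M (\<lambda>x. K powr p)" by simp
  have Ri: "integrable M (\<lambda>x. (c * (Y x)\<^sup>2 + K) powr p)"
    by (rule integrable_powr_add[OF _ _ _ _ _ f1i f2i]) (use c K p in auto)
  have R0: "(c * (Y x)\<^sup>2 + K) powr p \<ge> 0" for x by simp
  have Req: "(\<integral>\<^sup>+ x. ennreal ((c * (Y x)\<^sup>2 + K) powr (q / 2)) \<partial>M) = ennreal (\<integral>x. (c * (Y x)\<^sup>2 + K) powr p \<partial>M)"
    using nn_integral_eq_integral[OF Ri] by (simp add: p_def)
  have fin: "(\<integral>\<^sup>+ x. ennreal (Z x powr q) \<partial>M) < \<infinity>" using le Req by (simp add: order.strict_trans1)
  show Zi: "integrable M (\<lambda>x. Z x powr q)" by (rule integrableI_nonneg) (use fin in auto)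
  have "ennreal (\<integral>x. Z x powr q \<partial>M) \<le> ennreal (\<integral>x. (c * (Y x)\<^sup>2 + K) powr p \<partial>M)"
    using le Req nn_integral_eq_integral[OF Zi] by simp
  then have I1: "(\<integral>x. Z x powr q \<partial>M) \<le> (\<integral>x. (c * (Y x)\<^sup>2 + K) powr p \<partial>M)"
    by (subst (asm) ennreal_le_iff) (auto intro!: integral_nonneg_AE)
  have "(\<integral>x. Z x powr q \<partial>M) powr (2/q) \<le> (\<integral>x. (c * (Y x)\<^sup>2 + K) powr p \<partial>M) powr (1/p)"
    using I1 q by (simp add: p_def) (intro powr_mono2, auto intro!: integral_nonneg_AE)
  also have "\<dots> \<le> (\<integral>x. (c * (Y x)\<^sup>2) powr p \<partial>M) powr (1/p) + (\<integral>x. K powr p \<partial>M) powr (1/p)"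
    by (rule Minkowski_inequality_integral[OF p]) (use c K f1i f2i in auto)
  also have "(\<integral>x. K powr p \<partial>M) powr (1/p) = K" using K p by (simp add: prob_space powr_powr)
  also have "(\<integral>x. (c * (Y x)\<^sup>2) powr p \<partial>M) powr (1/p) = c * (\<integral>x. Y x powr q \<partial>M) powr (2/q)"
  proof -
    define I where "I = (\<integral>x. Y x powr q \<partial>M)"
    have e: "(\<integral>x. (c * (Y x)\<^sup>2) powr p \<partial>M) = c powr p * I" by (simp add: Y2 I_def)
    have I0: "I \<ge> 0" unfolding I_def by (intro integral_nonneg_AE) auto
    have "(c powr p * I) powr (1/p) = c * I powr (1/p)" using c p I0 by (simp add: powr_mult powr_powr)
    moreover have "1/p = 2/q" by (simp add: p_def)
    ultimately show ?thesis unfolding e I_def by simp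
  qed
  finally show "(\<integral>x. Z x powr q \<partial>M) powr (2/q) \<le> c * (\<integral>x. Y x powr q \<partial>M) powr (2/q) + K" .
qed

lemma Lq_recursion:
  fixes M :: "'a measure" and X :: "nat \<Rightarrow> 'a \<Rightarrow> real^'d" and \<Phi> :: "real^'d \<Rightarrow> real"
  assumes Mp: "prob_space M" and c: "c \<ge> 0" and K: "K \<ge> 0" and q: "q \<ge> 2"
    and Xm: "\<And>j. X j \<in> borel_measurable M"
    and \<Phi>0: "\<And>\<beta>. \<Phi> \<beta> \<ge> 0"
    and \<Phi>le: "\<And>\<beta>. \<Phi> \<beta> \<le> (c * (lsnorm s (\<beta> - bstar))\<^sup>2 + K) powr (q / 2)"
    and ident: "\<And>j. (\<integral>\<^sup>+ \<omega>. ennreal (lsnorm s (X (Suc j) \<omega> - bstar) powr q) \<partial>M) = (\<integral>\<^sup>+ \<omega>. ennreal (\<Phi> (X j \<omega>)) \<partial>M)"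
    and base: "integrable M (\<lambda>\<omega>. lsnorm s (X 0 \<omega> - bstar) powr q)"
  shows "\<forall>k \<ge> 1. (lq_norm M q (\<lambda>\<omega>. lsnorm s (X k \<omega> - bstar)))\<^sup>2
            \<le> c * (lq_norm M q (\<lambda>\<omega>. lsnorm s (X (k - 1) \<omega> - bstar)))\<^sup>2 + K"
proof -
  have Nm[measurable]: "(\<lambda>\<omega>. lsnorm s (X j \<omega> - bstar)) \<in> borel_measurable M" for j
    using Xm[of j] by measurable
  have le: "(\<integral>\<^sup>+ \<omega>. ennreal (lsnorm s (X (Suc j) \<omega> - bstar) powr q) \<partial>M)
      \<le> (\<integral>\<^sup>+ \<omega>. ennreal ((c * (lsnorm s (X j \<omega> - bstar))\<^sup>2 + K) powr (q / 2)) \<partial>M)" for j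
    unfolding ident by (intro nn_integral_mono ennreal_leI \<Phi>le)
  note CS = Lq_bound_of_nn_integral_le[OF Mp c K q Nm Nm lsnorm_nonneg lsnorm_nonneg]
  have int: "integrable M (\<lambda>\<omega>. lsnorm s (X j \<omega> - bstar) powr q)" for j
  proof (induction j)
    case 0 show ?case by (rule base)
  next
    case (Suc j) show ?case by (rule CS(1)[OF Suc.IH le])
  qed
  show ?thesis
  proof (intro allI impI)
    fix k :: nat assume "k \<ge> 1"
    then obtain j where k: "k = Suc j" by (cases k) auto
    have "(\<integral>x. lsnorm s (X (Suc j) x - bstar) powr q \<partial>M) powr (2/q) \<le> c * (\<integral>x. lsnorm s (X j x - bstar) powr q \<partial>M) powr (2/q) + K"
      by (rule CS(2)[OF int le])
    then show "(lq_norm M q (\<lambda>\<omega>. lsnorm s (X k \<omega> - bstar)))\<^sup>2 \<le> c * (lq_norm M q (\<lambda>\<omega>. lsnorm s (X (k - 1) \<omega> - bstar)))\<^sup>2 + K"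
      by (simp add: k lq_norm_sq lsnorm_nonneg)
  qed
qed

lemma gradient_zero_at_minimiser:
  fixes G :: "real^'d \<Rightarrow> real"
  assumes "(G has_derivative (\<lambda>h. dG \<bullet> h)) (at b)" and "\<And>b'. G b \<le> G b'"
  shows "dG = 0"
proof -
  have "(\<lambda>h. dG \<bullet> h) = (\<lambda>h. 0)"
    by (rule has_derivative_local_min[OF assms(1)]) (simp add: assms(2) always_eventually)
  then have "dG \<bullet> dG = 0" by meson
  then show ?thesis by simp
qed

lemma coeff_nonneg_if_quadratic_bound_nonneg:
  fixes y :: "real^'d"
  assumes s: "s > 0" and nonneg: "\<And>x. 0 \<le> c * lsnorm s (x - y) ^ 2 + K"
  shows "c \<ge> 0"
proof (rule ccontr)
  assume "\<not> c \<ge> 0"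
  then have c: "c < 0" by simp
  define e :: "real^'d" where "e = (\<chi> i. 1)"
  have "e \<noteq> 0" by (simp add: e_def vec_eq_iff)
  then have e: "lsnorm s e > 0" using lsnorm_eq_0_iff[OF s, of e] lsnorm_nonneg[of s e] by auto
  define u where "u = sqrt ((\<bar>K\<bar> + 1) / (- c))"
  have u: "u \<ge> 0" "u\<^sup>2 = (\<bar>K\<bar> + 1) / (- c)" using c by (auto simp: u_def divide_nonneg_neg)
  have "lsnorm s ((y + (u / lsnorm s e) *\<^sub>R e) - y) = u"
    using s u e by (simp add: lsnorm_scale)
  then have "0 \<le> c * ((\<bar>K\<bar> + 1) / (- c)) + K"
    using nonneg[of "y + (u / lsnorm s e) *\<^sub>R e"] u by simp
  also have "\<dots> = K - \<bar>K\<bar> - 1" using c by (simp add: field_simps)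
  finally show False by linarith
qed

locale iid_sgd =
  fixes M :: "'a measure" and P :: "'x measure" and \<xi> :: "nat \<Rightarrow> 'a \<Rightarrow> 'x"
    and dg :: "real^'d \<Rightarrow> 'x \<Rightarrow> real^'d" and \<alpha> :: real
  assumes M_prob: "prob_space M" and P_prob: "prob_space P"
    and xi_indep: "prob_space.indep_vars M (\<lambda>_. P) \<xi> {1..}"
    and xi_law: "\<And>k. k \<ge> 1 \<Longrightarrow> distr M P (\<xi> k) = P"
    and dg_meas: "(\<lambda>(b, x). dg b x) \<in> borel_measurable (borel \<Otimes>\<^sub>M P)"
begin

sublocale prob_space M by (rule M_prob)

lemma measurable_xi: "k \<ge> 1 \<Longrightarrow> \<xi> k \<in> M \<rightarrow>\<^sub>M P"
  using xi_indep unfolding prob_space.indep_vars_def[OF M_prob] by auto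

lemma measurable_samples: "(\<lambda>\<omega>. \<lambda>k\<in>{1..}. \<xi> k \<omega>) \<in> M \<rightarrow>\<^sub>M PiM {1..} (\<lambda>_. P)"
  by (rule measurable_restrict) (use measurable_xi in auto)

lemma borel_measurable_sgd:
  assumes B0: "B0 \<in> borel_measurable M"
  shows "sgd dg \<alpha> \<xi> B0 j \<in> borel_measurable M"
proof (induction j)
  case 0 then show ?case using B0 by simp
next
  case (Suc j)
  have "(\<lambda>\<omega>. (sgd dg \<alpha> \<xi> B0 j \<omega>, \<xi> (Suc j) \<omega>)) \<in> M \<rightarrow>\<^sub>M borel \<Otimes>\<^sub>M P"
    by (rule measurable_Pair[OF Suc.IH measurable_xi]) simp
  from measurable_compose[OF this dg_meas]
  have "(\<lambda>\<omega>. dg (sgd dg \<alpha> \<xi> B0 j \<omega>) (\<xi> (Suc j) \<omega>)) \<in> borel_measurable M" by simp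
  then show ?case using Suc.IH by simp
qed

text \<open>The iterate after j steps depends only on \<open>\<xi>\<^sub>1, \<dots>, \<xi>\<^sub>j\<close>, hence is independent
  of \<open>\<xi>\<^sub>j\<^sub>+\<^sub>1\<close>; integrating the last sample out gives the Markov transition.\<close>
lemma nn_integral_sgd_Suc:
  fixes f :: "real^'d \<Rightarrow> ennreal"
  assumes f[measurable]: "f \<in> borel_measurable borel"
  shows "(\<integral>\<^sup>+ \<omega>. f (sgd dg \<alpha> \<xi> (\<lambda>_. b) (Suc j) \<omega>) \<partial>M)
       = (\<integral>\<^sup>+ \<omega>. (\<integral>\<^sup>+ x. f (sgd dg \<alpha> \<xi> (\<lambda>_. b) j \<omega> - \<alpha> *\<^sub>R dg (sgd dg \<alpha> \<xi> (\<lambda>_. b) j \<omega>) x) \<partial>P) \<partial>M)"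
proof -
  interpret P: prob_space P by (rule P_prob)
  define X where "X = (\<lambda>\<omega>. sgd dg \<alpha> \<xi> (\<lambda>_. b) j \<omega>)"
  define R1 where "R1 = (\<lambda>\<omega>. restrict (\<lambda>i. \<xi> i \<omega>) {1..j})"
  define R2 where "R2 = (\<lambda>\<omega>. restrict (\<lambda>i. \<xi> i \<omega>) {Suc j})"
  define Y1 where "Y1 = (\<lambda>t. sgd_path dg \<alpha> j b t)"
  define Y2 where "Y2 = (\<lambda>t::nat \<Rightarrow> 'x. t (Suc j))"
  have X_eq: "X = Y1 \<circ> R1"
    by (auto simp: X_def Y1_def R1_def fun_eq_iff sgd_eq_sgd_path intro!: sgd_path_cong)
  have xi_eq: "\<xi> (Suc j) = Y2 \<circ> R2"
    by (auto simp: fun_eq_iff Y2_def R2_def)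
  have ind0: "indep_var (PiM {1..j} (\<lambda>_. P)) R1 (PiM {Suc j} (\<lambda>_. P)) R2"
    unfolding R1_def R2_def by (rule indep_var_restrict[OF xi_indep]) auto
  have Y1m: "Y1 \<in> PiM {1..j} (\<lambda>_. P) \<rightarrow>\<^sub>M borel"
  proof -
    have "(\<lambda>t. (b, t)) \<in> PiM {1..j} (\<lambda>_. P) \<rightarrow>\<^sub>M borel \<Otimes>\<^sub>M PiM {1..j} (\<lambda>_. P)" by measurable
    from measurable_compose[OF this borel_measurable_sgd_path[OF dg_meas, of j "{1..j}" \<alpha>]] show ?thesis by (simp add: Y1_def)
  qed
  have Y2m: "Y2 \<in> PiM {Suc j} (\<lambda>_. P) \<rightarrow>\<^sub>M P"
    unfolding Y2_def by (rule measurable_component_singleton) simp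
  have R1m: "R1 \<in> M \<rightarrow>\<^sub>M PiM {1..j} (\<lambda>_. P)" and R2m: "R2 \<in> M \<rightarrow>\<^sub>M PiM {Suc j} (\<lambda>_. P)"
    using indep_var_rv1[OF ind0] indep_var_rv2[OF ind0] by auto
  have Xm[measurable]: "X \<in> M \<rightarrow>\<^sub>M borel" unfolding X_eq by (rule measurable_comp[OF R1m Y1m])
  have xim[measurable]: "\<xi> (Suc j) \<in> M \<rightarrow>\<^sub>M P" unfolding xi_eq by (rule measurable_comp[OF R2m Y2m])
  have ind: "indep_set {X -` A \<inter> space M | A. A \<in> sets borel} {\<xi> (Suc j) -` A \<inter> space M | A. A \<in> sets P}"
    unfolding X_eq xi_eq by (rule indep_set_vimage_compose[OF ind0 Y1m Y2m])
  have law: "distr M P (\<xi> (Suc j)) = P" using xi_law[of "Suc j"] by simp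
  define G where "G = (\<lambda>z. f (fst z - \<alpha> *\<^sub>R dg (fst z) (snd z)))"
  have dgm[measurable]: "(\<lambda>z. dg (fst z) (snd z)) \<in> borel_measurable (borel \<Otimes>\<^sub>M P)"
    using dg_meas by (simp add: case_prod_beta')
  have Gm[measurable]: "G \<in> borel_measurable (borel \<Otimes>\<^sub>M P)" unfolding G_def by measurable
  have "(\<integral>\<^sup>+ \<omega>. f (sgd dg \<alpha> \<xi> (\<lambda>_. b) (Suc j) \<omega>) \<partial>M) = (\<integral>\<^sup>+ \<omega>. G (X \<omega>, \<xi> (Suc j) \<omega>) \<partial>M)"
    by (simp add: G_def X_def)
  also have "\<dots> = (\<integral>\<^sup>+ \<omega>. (\<integral>\<^sup>+ y. G (X \<omega>, y) \<partial>distr M P (\<xi> (Suc j))) \<partial>M)"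
    by (rule nn_integral_indep_set[OF M_prob Xm xim ind Gm])
  finally show ?thesis by (simp add: law G_def X_def)
qed

lemma nn_integral_sgd_indep_init:
  fixes f :: "real^'d \<Rightarrow> ennreal"
  assumes B0[measurable]: "B0 \<in> borel_measurable M"
    and ind: "prob_space.indep_set M {B0 -` A \<inter> space M | A. A \<in> sets borel}
             {(\<lambda>\<omega>. \<lambda>k\<in>{1..}. \<xi> k \<omega>) -` A \<inter> space M | A. A \<in> sets (\<Pi>\<^sub>M k\<in>{1..}. P)}"
    and f[measurable]: "f \<in> borel_measurable borel"
  shows "(\<integral>\<^sup>+ \<omega>. f (sgd dg \<alpha> \<xi> B0 k \<omega>) \<partial>M) = (\<integral>\<^sup>+ \<omega>'. (\<integral>\<^sup>+ \<omega>. f (sgd dg \<alpha> \<xi> (\<lambda>_. B0 \<omega>') k \<omega>) \<partial>M) \<partial>M)"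
proof -
  define Xi where "Xi = (\<lambda>\<omega>. \<lambda>k\<in>{1..}. \<xi> k \<omega>)"
  have Xim[measurable]: "Xi \<in> M \<rightarrow>\<^sub>M PiM {1..} (\<lambda>_. P)" using measurable_samples by (simp add: Xi_def)
  define g where "g = (\<lambda>z. f (sgd_path dg \<alpha> k (fst z) (snd z)))"
  have Sm: "(\<lambda>(b, t). sgd_path dg \<alpha> k b t) \<in> borel_measurable (borel \<Otimes>\<^sub>M PiM {1..} (\<lambda>_. P))"
    by (rule borel_measurable_sgd_path[OF dg_meas]) auto
  have gm[measurable]: "g \<in> borel_measurable (borel \<Otimes>\<^sub>M PiM {1..} (\<lambda>_. P))"
    unfolding g_def using measurable_compose[OF Sm f] by (simp add: case_prod_beta')
  have sgdS: "sgd dg \<alpha> \<xi> B0 k \<omega> = sgd_path dg \<alpha> k (B0 \<omega>) (Xi \<omega>)" for B0 \<omega>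
    unfolding sgd_eq_sgd_path Xi_def by (rule sgd_path_cong) auto
  have "(\<integral>\<^sup>+ \<omega>. f (sgd dg \<alpha> \<xi> B0 k \<omega>) \<partial>M) = (\<integral>\<^sup>+ \<omega>. g (B0 \<omega>, Xi \<omega>) \<partial>M)"
    by (simp add: g_def sgdS)
  also have "\<dots> = (\<integral>\<^sup>+ \<omega>'. (\<integral>\<^sup>+ t. g (B0 \<omega>', t) \<partial>distr M (PiM {1..} (\<lambda>_. P)) Xi) \<partial>M)"
    by (rule nn_integral_indep_set[OF M_prob B0 Xim _ gm]) (use ind in \<open>simp add: Xi_def\<close>)
  also have "\<dots> = (\<integral>\<^sup>+ \<omega>'. (\<integral>\<^sup>+ \<omega>. g (B0 \<omega>', Xi \<omega>) \<partial>M) \<partial>M)"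
  proof (rule nn_integral_cong)
    fix \<omega>'
    have "(\<lambda>t. g (B0 \<omega>', t)) \<in> borel_measurable (PiM {1..} (\<lambda>_. P))" by measurable
    then show "(\<integral>\<^sup>+ t. g (B0 \<omega>', t) \<partial>distr M (PiM {1..} (\<lambda>_. P)) Xi) = (\<integral>\<^sup>+ \<omega>. g (B0 \<omega>', Xi \<omega>) \<partial>M)"
      by (intro nn_integral_distr[OF Xim]) (simp cong: measurable_cong_sets)
  qed
  also have "\<dots> = (\<integral>\<^sup>+ \<omega>'. (\<integral>\<^sup>+ \<omega>. f (sgd dg \<alpha> \<xi> (\<lambda>_. B0 \<omega>') k \<omega>) \<partial>M) \<partial>M)"
    by (simp add: g_def sgdS)
  finally show ?thesis .
qed

lemma nn_integral_sgd_Suc_indep_init: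
  fixes f :: "real^'d \<Rightarrow> ennreal"
  assumes B0[measurable]: "B0 \<in> borel_measurable M"
    and ind: "prob_space.indep_set M {B0 -` A \<inter> space M | A. A \<in> sets borel}
             {(\<lambda>\<omega>. \<lambda>k\<in>{1..}. \<xi> k \<omega>) -` A \<inter> space M | A. A \<in> sets (\<Pi>\<^sub>M k\<in>{1..}. P)}"
    and f[measurable]: "f \<in> borel_measurable borel"
  shows "(\<integral>\<^sup>+ \<omega>. f (sgd dg \<alpha> \<xi> B0 (Suc j) \<omega>) \<partial>M)
       = (\<integral>\<^sup>+ \<omega>. (\<integral>\<^sup>+ x. f (sgd dg \<alpha> \<xi> B0 j \<omega> - \<alpha> *\<^sub>R dg (sgd dg \<alpha> \<xi> B0 j \<omega>) x) \<partial>P) \<partial>M)"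
proof -
  interpret P: prob_space P by (rule P_prob)
  define f' where "f' = (\<lambda>y. \<integral>\<^sup>+ x. f (y - \<alpha> *\<^sub>R dg y x) \<partial>P)"
  have [measurable]: "(\<lambda>z. dg (fst z) (snd z)) \<in> borel_measurable (borel \<Otimes>\<^sub>M P)"
    using dg_meas by (simp add: case_prod_beta')
  have "(\<lambda>z. f (fst z - \<alpha> *\<^sub>R dg (fst z) (snd z))) \<in> borel_measurable (borel \<Otimes>\<^sub>M P)" by measurable
  from P.borel_measurable_nn_integral_fst[OF this]
  have f'[measurable]: "f' \<in> borel_measurable borel" by (simp add: f'_def)
  note decomp = nn_integral_sgd_indep_init[OF B0 ind]
  have "(\<integral>\<^sup>+ \<omega>. f (sgd dg \<alpha> \<xi> B0 (Suc j) \<omega>) \<partial>M)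
      = (\<integral>\<^sup>+ \<omega>'. (\<integral>\<^sup>+ \<omega>. f (sgd dg \<alpha> \<xi> (\<lambda>_. B0 \<omega>') (Suc j) \<omega>) \<partial>M) \<partial>M)"
    by (rule decomp[OF f])
  also have "\<dots> = (\<integral>\<^sup>+ \<omega>'. (\<integral>\<^sup>+ \<omega>. f' (sgd dg \<alpha> \<xi> (\<lambda>_. B0 \<omega>') j \<omega>) \<partial>M) \<partial>M)"
    unfolding f'_def by (intro nn_integral_cong nn_integral_sgd_Suc f)
  also have "\<dots> = (\<integral>\<^sup>+ \<omega>. f' (sgd dg \<alpha> \<xi> B0 j \<omega>) \<partial>M)"
    by (rule decomp[OF f', symmetric])
  finally show ?thesis by (simp add: f'_def)
qed

lemma sgd_Lq_recursion:
  fixes B0 :: "'a \<Rightarrow> real^'d"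
  assumes K: "K \<ge> 0" and q: "q \<ge> 2" and s: "s \<ge> 2"
    and step_int: "\<And>\<beta>. integrable P (\<lambda>x. lsnorm s (\<beta> - \<alpha> *\<^sub>R dg \<beta> x - bstar) powr q)"
    and step_le: "\<And>\<beta>. (lq_norm P q (\<lambda>x. lsnorm s (\<beta> - \<alpha> *\<^sub>R dg \<beta> x - bstar)))\<^sup>2
                      \<le> c * lsnorm s (\<beta> - bstar) ^ 2 + K"
    and B0[measurable]: "B0 \<in> borel_measurable M"
    and B0_int: "integrable M (\<lambda>\<omega>. lsnorm s (B0 \<omega>) powr q)"
    and B0_step: "\<And>f j. f \<in> borel_measurable borel \<Longrightarrow> (\<integral>\<^sup>+ \<omega>. f (sgd dg \<alpha> \<xi> B0 (Suc j) \<omega>) \<partial>M)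
       = (\<integral>\<^sup>+ \<omega>. (\<integral>\<^sup>+ x. f (sgd dg \<alpha> \<xi> B0 j \<omega> - \<alpha> *\<^sub>R dg (sgd dg \<alpha> \<xi> B0 j \<omega>) x) \<partial>P) \<partial>M)"
  shows "\<forall>k \<ge> 1. (lq_norm M q (\<lambda>\<omega>. lsnorm s (sgd dg \<alpha> \<xi> B0 k \<omega> - bstar)))\<^sup>2
            \<le> c * (lq_norm M q (\<lambda>\<omega>. lsnorm s (sgd dg \<alpha> \<xi> B0 (k - 1) \<omega> - bstar)))\<^sup>2 + K"
proof (rule Lq_recursion[OF M_prob _ K q])
  define \<Phi> where "\<Phi> = (\<lambda>\<beta>. \<integral>x. lsnorm s (\<beta> - \<alpha> *\<^sub>R dg \<beta> x - bstar) powr q \<partial>P)"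
  show \<Phi>_nonneg: "\<Phi> \<beta> \<ge> 0" for \<beta> unfolding \<Phi>_def by (intro integral_nonneg_AE) auto
  show "c \<ge> 0"
  proof (rule coeff_nonneg_if_quadratic_bound_nonneg[where y=bstar])
    show "s > 0" using s by simp
    show "0 \<le> c * lsnorm s (\<beta> - bstar) ^ 2 + K" for \<beta>
      by (rule order_trans[OF zero_le_power2 step_le])
  qed
  show "\<Phi> \<beta> \<le> (c * (lsnorm s (\<beta> - bstar))\<^sup>2 + K) powr (q / 2)" for \<beta>
  proof -
    have "\<Phi> \<beta> = (\<Phi> \<beta> powr (2/q)) powr (q/2)" using \<Phi>_nonneg[of \<beta>] q by (simp add: powr_powr)
    also have "\<dots> \<le> (c * (lsnorm s (\<beta> - bstar))\<^sup>2 + K) powr (q / 2)"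
      using step_le[of \<beta>] q by (intro powr_mono2) (auto simp: \<Phi>_def lq_norm_lsnorm_sq)
    finally show ?thesis .
  qed
  show "sgd dg \<alpha> \<xi> B0 j \<in> borel_measurable M" for j by (rule borel_measurable_sgd[OF B0])
  show "integrable M (\<lambda>\<omega>. lsnorm s (sgd dg \<alpha> \<xi> B0 0 \<omega> - bstar) powr q)"
    using integrable_lsnorm_powr_add[where V=B0 and W="\<lambda>_. - bstar"] s q B0_int by simp
  show "(\<integral>\<^sup>+ \<omega>. ennreal (lsnorm s (sgd dg \<alpha> \<xi> B0 (Suc j) \<omega> - bstar) powr q) \<partial>M)
      = (\<integral>\<^sup>+ \<omega>. ennreal (\<Phi> (sgd dg \<alpha> \<xi> B0 j \<omega>)) \<partial>M)" for j
    using B0_step[of "\<lambda>y. ennreal (lsnorm s (y - bstar) powr q)" j]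
    by (simp add: \<Phi>_def nn_integral_eq_integral[OF step_int])
qed

end

theorem mainTheorem2:
  fixes M :: "'a measure" and P :: "'x measure"
    and \<xi> :: "nat \<Rightarrow> 'a \<Rightarrow> 'x"
    and g :: "real^'d \<Rightarrow> 'x \<Rightarrow> real" and dg :: "real^'d \<Rightarrow> 'x \<Rightarrow> real^'d"
    and G :: "real^'d \<Rightarrow> real" and dG :: "real^'d \<Rightarrow> real^'d"
    and s :: nat and q \<mu> L \<alpha> :: real
    and bstar b0 :: "real^'d"
    and \<pi> :: "(real^'d) measure" and b0c :: "'a \<Rightarrow> real^'d"
  assumes M: "prob_space M" and P: "prob_space P"
    \<comment> \<open>i.i.d. samples xi_1, xi_2, ... with law P\<close>
    and xi_indep: "prob_space.indep_vars M (\<lambda>_. P) \<xi> {1..}"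
    and xi_law: "\<And>k. k \<ge> 1 \<Longrightarrow> distr M P (\<xi> k) = P"
    \<comment> \<open>g differentiable in beta with gradient dg; dg jointly measurable\<close>
    and g_deriv: "\<And>x b. x \<in> space P \<Longrightarrow> ((\<lambda>b'. g b' x) has_derivative (\<lambda>h. dg b x \<bullet> h)) (at b)"
    and dg_meas: "(\<lambda>(b, x). dg b x) \<in> borel_measurable (borel \<Otimes>\<^sub>M P)"
    \<comment> \<open>G = E g, differentiable with gradient E grad g\<close>
    and g_int: "\<And>b. integrable P (g b)"
    and G_def: "\<And>b. G b = (\<integral>x. g b x \<partial>P)"
    and G_deriv: "\<And>b. (G has_derivative (\<lambda>h. dG b \<bullet> h)) (at b)"
    and dG_def: "\<And>b. dG b = (\<integral>x. dg b x \<partial>P)"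
    \<comment> \<open>parameters\<close>
    and q: "q \<ge> 2" and s: "s \<ge> 2" "even s"
    \<comment> \<open>A1: coercivity\<close>
    and A1: "\<And>b :: nat \<Rightarrow> real^'d. filterlim (\<lambda>n. lsnorm s (b n)) at_top sequentially
               \<Longrightarrow> filterlim (\<lambda>n. G (b n)) at_top sequentially"
    \<comment> \<open>A2(s, mu)\<close>
    and mu: "\<mu> > 0"
    and A2: "\<And>b b'. odot_pow (b - b') (s - 1) \<bullet> (dG b - dG b') \<ge> \<mu> * lsnorm s (b - b') ^ s"
    \<comment> \<open>bstar: the (unique) global minimiser of G\<close>
    and bstar: "\<And>b. G bstar \<le> G b"
    \<comment> \<open>A3(s, q)\<close>
    and A3_M: "integrable P (\<lambda>x. \<bar>lsnorm s (dg bstar x)\<bar> powr q)"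
    and L: "L > 0"
    and A3_L_int: "\<And>b b'. integrable P (\<lambda>x. \<bar>lsnorm s (dg b x - dg b' x)\<bar> powr q)"
    and A3_L: "\<And>b b'. lq_norm P q (\<lambda>x. lsnorm s (dg b x - dg b' x)) \<le> L * lsnorm s (b - b')"
    \<comment> \<open>learning rate\<close>
    and alpha: "\<alpha> > 0"
  shows "(\<forall>k \<ge> 1.
           lq_norm M q (\<lambda>\<omega>. lsnorm s (sgd dg \<alpha> \<xi> (\<lambda>_. b0) k \<omega> - bstar)) ^ 2
         \<le> (1 - 2 * \<alpha> * \<mu> + 7 * max q (real s) * \<alpha>\<^sup>2 * L\<^sup>2)
             * lq_norm M q (\<lambda>\<omega>. lsnorm s (sgd dg \<alpha> \<xi> (\<lambda>_. b0) (k - 1) \<omega> - bstar)) ^ 2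
           + 3 * max q (real s) * \<alpha>\<^sup>2 * (lq_norm P q (\<lambda>x. lsnorm s (dg bstar x))) ^ 2)
    \<and> (( \<alpha> < 2 * \<mu> / (max q (real s) * L\<^sup>2)
           \<and> prob_space \<pi>
           \<and> sets \<pi> = sets borel
           \<and> distr (\<pi> \<Otimes>\<^sub>M P) borel (\<lambda>(b, x). b - \<alpha> *\<^sub>R dg b x) = \<pi>
           \<and> integrable \<pi> (\<lambda>u. lsnorm s u powr q)
           \<and> distr M borel b0c = \<pi>
           \<and> b0c \<in> borel_measurable M
           \<and> prob_space.indep_set M {b0c -` A \<inter> space M | A. A \<in> sets borel}
             {(\<lambda>\<omega>. \<lambda>k\<in>{1..}. \<xi> k \<omega>) -` A \<inter> space M | A. A \<in> sets (\<Pi>\<^sub>M k\<in>{1..}. P)} )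
         \<longrightarrow> (\<forall>k \<ge> 1.
           lq_norm M q (\<lambda>\<omega>. lsnorm s (sgd dg \<alpha> \<xi> b0c k \<omega> - bstar)) ^ 2
         \<le> (1 - 2 * \<alpha> * \<mu> + 7 * max q (real s) * \<alpha>\<^sup>2 * L\<^sup>2)
             * lq_norm M q (\<lambda>\<omega>. lsnorm s (sgd dg \<alpha> \<xi> b0c (k - 1) \<omega> - bstar)) ^ 2
           + 3 * max q (real s) * \<alpha>\<^sup>2 * (lq_norm P q (\<lambda>x. lsnorm s (dg bstar x))) ^ 2))"
proof -
  \<comment> \<open>A1 and the hypotheses on \<open>g\<close> only guarantee that a minimiser exists; in the stationary case
    neither the invariance of \<open>\<pi>\<close> nor the bound on \<open>\<alpha>\<close> is needed, only the independence of the
    initialisation from the samples and its finite \<open>q\<close>-th moment.\<close>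
  interpret iid_sgd M P \<xi> dg \<alpha>
    using M P xi_indep xi_law dg_meas by (simp add: iid_sgd_def)
  have dGstar: "dG bstar = 0" by (rule gradient_zero_at_minimiser[OF G_deriv bstar])
  note step = sgd_step_bound[OF P dg_meas dG_def q s A2 dGstar A3_M A3_L_int A3_L less_imp_le[OF alpha]]
  have K: "0 \<le> 3 * max q (real s) * \<alpha>\<^sup>2 * (lq_norm P q (\<lambda>x. lsnorm s (dg bstar x)))\<^sup>2"
    by simp
  note recursion = sgd_Lq_recursion[OF K q s(1) step]
  show ?thesis
  proof (intro conjI impI, goal_cases)
    case 1
    show ?case by (rule recursion[OF measurable_const _ nn_integral_sgd_Suc]) auto
  next
    case 2
    then have b0c: "b0c \<in> borel_measurable M"
      and "integrable (distr M borel b0c) (\<lambda>u. lsnorm s u powr q)" by auto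
    then have "integrable M (\<lambda>\<omega>. lsnorm s (b0c \<omega>) powr q)" by (simp add: integrable_distr_eq)
    with 2 show ?case by (intro recursion[OF b0c] nn_integral_sgd_Suc_indep_init) auto
  qed
qed

end
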